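(* Let $m\mid n$ be positive integers, $q$ a primitive $m$-th root of unity, $\alpha\in\mathbb{C}$, and fix a primitive $n$-th root of unity $\zeta$ with $\zeta^{n/m}=q$. Let $T=T(n,m,\alpha)$. (i) Suppose $A$ is a central simple algebra which is a $T$-module algebra. Let $A=\bigoplus_{i\in\mathbb{Z}/n\mathbb{Z}}A_i$ be the decomposition into eigenspaces for $g$, where $g$ acts on $A_i$ by $\zeta^i$, and write $|a|=i$ for $a\in A_i$. Then there exists $c\in A_{n/m}$ such that $x\cdot a=ca-\zeta^{|a|}ac$ for every homogeneous $a\in A$, and this $c$ satisfies $c^ma-\zeta^{m|a|}ac^m=\alpha(1-\zeta^{m|a|})a$ for every homogeneous $a\in A$. (ii) Conversely, let $A=\bigoplus_{i\in\mathbb{Z}/n\mathbb{Z}}A_i$ be a $\mathbb{Z}/n\mathbb{Z}$-graded central simple division algebra and let $c\in A_{n/m}$ satisfy $c^ma-\zeta^{m|a|}ac^m=\alpha(1-\zeta^{m|a|})a$ for each homogeneous $a\in A$. Then there is a unique action of $T$ on $A$ with $g\cdot a=\zeta^{|a|}a$ and $x\cdot a=ca-\zeta^{|a|}ac$ for homogeneous $a$, and this action makes $A$ a $T$-module algebra.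
   Context: For positive integers $m\mid n$, a primitive $m$-th root of unity $q$, and $\alpha\in\mathbb{C}$, the generalized Taft algebra is the Hopf algebra $T(n,m,\alpha)=\mathbb{C}\langle x,g\rangle/(x^m-\alpha(1-g^m),\ g^n-1,\ gxg^{-1}-qx)$ with $g$ grouplike and $\Delta(x)=x\otimes 1+g\otimes x$. A central simple algebra is a simple algebra finite-dimensional over its center. A $T$-module algebra is an algebra $A$ with a $T$-module structure satisfying $h\cdot(ab)=(h_1\cdot a)(h_2\cdot b)$, $h\cdot 1=\epsilon(h)1$; in particular $g$ acts by an algebra automorphism, so the eigenspace decomposition is an algebra grading. *)

theory Defs
  imports Complex_Main
begin

text \<open>A complex algebra: a unital ring together with a unital ring homomorphism
  from the complex numbers into its centre; scalar multiplication by z is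
  left multiplication by iota z.\<close>
definition complex_algebra :: "(complex \<Rightarrow> 'a::ring_1) \<Rightarrow> bool" where
  "complex_algebra \<iota> \<longleftrightarrow>
     \<iota> 1 = 1 \<and> (\<forall>z w. \<iota> (z + w) = \<iota> z + \<iota> w) \<and> (\<forall>z w. \<iota> (z * w) = \<iota> z * \<iota> w)
     \<and> (\<forall>z a. \<iota> z * a = a * \<iota> z)"

definition centre :: "'a::ring_1 set" where
  "centre = {z. \<forall>a. z * a = a * z}"

definition two_sided_ideal :: "'a::ring_1 set \<Rightarrow> bool" where
  "two_sided_ideal I \<longleftrightarrow> 0 \<in> I \<and> (\<forall>a\<in>I. \<forall>b\<in>I. a + b \<in> I) \<and> (\<forall>a\<in>I. - a \<in> I)
     \<and> (\<forall>a\<in>I. \<forall>r. r * a \<in> I \<and> a * r \<in> I)"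

definition simple_ring :: "'a::ring_1 itself \<Rightarrow> bool" where
  "simple_ring _ \<longleftrightarrow> (1::'a) \<noteq> 0 \<and>
     (\<forall>I::'a set. two_sided_ideal I \<longrightarrow> I = {0} \<or> I = UNIV)"

definition central_simple :: "'a::ring_1 itself \<Rightarrow> bool" where
  "central_simple T \<longleftrightarrow> simple_ring T \<and>
     (\<exists>B::'a set. finite B \<and>
        (\<forall>a. \<exists>f. (\<forall>b\<in>B. f b \<in> centre) \<and> a = (\<Sum>b\<in>B. f b * b)))"

definition division_ring_pred :: "'a::ring_1 itself \<Rightarrow> bool" where
  "division_ring_pred _ \<longleftrightarrow> (1::'a) \<noteq> 0 \<and> (\<forall>a::'a. a \<noteq> 0 \<longrightarrow> (\<exists>b. a * b = 1 \<and> b * a = 1))"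

definition primitive_root_of_unity :: "nat \<Rightarrow> complex \<Rightarrow> bool" where
  "primitive_root_of_unity k z \<longleftrightarrow> z ^ k = 1 \<and> (\<forall>j. 0 < j \<and> j < k \<longrightarrow> z ^ j \<noteq> 1)"

definition c_linear :: "(complex \<Rightarrow> 'a::ring_1) \<Rightarrow> ('a \<Rightarrow> 'a) \<Rightarrow> bool" where
  "c_linear \<iota> f \<longleftrightarrow> (\<forall>a b. f (a + b) = f a + f b) \<and> (\<forall>z a. f (\<iota> z * a) = \<iota> z * f a)"

text \<open>A module over the generalized Taft algebra T(n,m,alpha) (with parameter q),
  given by the actions G of g and X of x: C-linear maps satisfying the defining
  relations x^m = alpha(1 - g^m), g^n = 1, g x g^{-1} = q x.\<close>
definition taft_module ::
  "(complex \<Rightarrow> 'a::ring_1) \<Rightarrow> nat \<Rightarrow> nat \<Rightarrow> complex \<Rightarrow> complex \<Rightarrow> ('a \<Rightarrow> 'a) \<Rightarrow> ('a \<Rightarrow> 'a) \<Rightarrow> bool" where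
  "taft_module \<iota> n m \<alpha> q G X \<longleftrightarrow> c_linear \<iota> G \<and> c_linear \<iota> X
     \<and> (\<forall>a. (X ^^ m) a = \<iota> \<alpha> * (a - (G ^^ m) a))
     \<and> (\<forall>a. (G ^^ n) a = a)
     \<and> (\<forall>a. G (X a) = \<iota> q * X (G a))"

text \<open>Module algebra: h.(ab) = (h1.a)(h2.b), h.1 = eps(h) 1, checked on the
  generators g (grouplike) and x (Delta x = x (x) 1 + g (x) x, eps x = 0).\<close>
definition taft_module_algebra ::
  "(complex \<Rightarrow> 'a::ring_1) \<Rightarrow> nat \<Rightarrow> nat \<Rightarrow> complex \<Rightarrow> complex \<Rightarrow> ('a \<Rightarrow> 'a) \<Rightarrow> ('a \<Rightarrow> 'a) \<Rightarrow> bool" where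
  "taft_module_algebra \<iota> n m \<alpha> q G X \<longleftrightarrow> taft_module \<iota> n m \<alpha> q G X
     \<and> (\<forall>a b. G (a * b) = G a * G b) \<and> G 1 = 1
     \<and> (\<forall>a b. X (a * b) = X a * b + G a * X b) \<and> X 1 = 0"

definition zn_graded :: "(complex \<Rightarrow> 'a::ring_1) \<Rightarrow> nat \<Rightarrow> (nat \<Rightarrow> 'a set) \<Rightarrow> bool" where
  "zn_graded \<iota> n Agr \<longleftrightarrow>
     (\<forall>i<n. 0 \<in> Agr i \<and> (\<forall>a\<in>Agr i. \<forall>b\<in>Agr i. a + b \<in> Agr i) \<and> (\<forall>z. \<forall>a\<in>Agr i. \<iota> z * a \<in> Agr i))
     \<and> (\<forall>i<n. \<forall>j<n. \<forall>a\<in>Agr i. \<forall>b\<in>Agr j. a * b \<in> Agr ((i + j) mod n))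
     \<and> (\<forall>a. \<exists>!f. (\<forall>i. (i < n \<longrightarrow> f i \<in> Agr i) \<and> (n \<le> i \<longrightarrow> f i = 0)) \<and> a = (\<Sum>i<n. f i))"

end

theory Submission
  imports Defs "HOL-Algebra.Embedded_Algebras" "HOL-Library.Function_Algebras"
begin

text \<open>(i) The generator \<open>g\<close> acts by an automorphism \<open>G\<close> of finite order and \<open>x\<close> by a
  \<open>G\<close>-twisted derivation \<open>X\<close>, and such derivations of a central simple algebra are inner.
  If \<open>G\<close> moves a central element \<open>z\<close>, then \<open>X\<close> is recovered from \<open>X z\<close>; for \<open>m = 1\<close> the relation
  \<open>x = \<alpha>(1 - g)\<close> exhibits \<open>X\<close> as inner. Otherwise \<open>q \<noteq> 1\<close> forces \<open>X\<close> to kill the centre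
  (each \<open>X z\<close> is a normalizing element of square zero), and a Skolem-Noether type argument
  applies: a dimension count over the centre \<open>Z\<close> shows that \<open>A \<otimes> A\<^sup>o\<^sup>p\<close> acts faithfully and
  densely on \<open>A\<close>, which yields \<open>e\<^sub>j, w\<^sub>j\<close> with \<open>\<Sum> e\<^sub>j a w\<^sub>j \<in> Z\<close> for all \<open>a\<close> and \<open>\<Sum> e\<^sub>j w\<^sub>j = 1\<close>;
  then \<open>-\<Sum> G(e\<^sub>j) X(w\<^sub>j)\<close> implements \<open>X\<close>. Averaging an implementing element over the cyclic
  group generated by \<open>G\<close> turns it into a \<open>q\<close>-eigenvector \<open>c\<close>. On a \<open>\<lambda>\<close>-eigenvector \<open>a\<close>,
  \<open>X\<^sup>k a = \<Sum>\<^sub>j (-\<lambda>)\<^sup>j e\<^sub>j(1, q, \<dots>, q\<^sup>k\<^sup>-\<^sup>1) c\<^sup>k\<^sup>-\<^sup>j a c\<^sup>j\<close>, and for \<open>k = m\<close> all middle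
  coefficients vanish because \<open>q\<close> is a primitive \<open>m\<close>-th root of unity; so \<open>X\<^sup>m a = c\<^sup>m a - \<lambda>\<^sup>m a c\<^sup>m\<close>,
  which \<open>x\<^sup>m = \<alpha>(1 - g\<^sup>m)\<close> turns into the stated relation.
  (ii) The grading defines \<open>G\<close>, and the same formula for \<open>X\<^sup>m\<close> turns the relation on \<open>c\<close> into
  \<open>x\<^sup>m = \<alpha>(1 - g\<^sup>m)\<close>; uniqueness holds because \<open>A\<close> is the sum of its homogeneous components.\<close>

section \<open>The centre of a simple ring\<close>

lemma centre_commute: "z \<in> centre \<Longrightarrow> z * a = a * z"
  by (simp add: centre_def)

lemma centre_left_commute:
  assumes "z \<in> centre"
  shows "x * (z * y) = z * (x * y)"
proof -
  have "x * (z * y) = (x * z) * y" by (simp add: mult.assoc)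
  also have "\<dots> = (z * x) * y" by (simp add: centre_commute[OF assms])
  finally show ?thesis by (simp add: mult.assoc)
qed

lemma zero_in_centre [simp]: "0 \<in> centre"
  and one_in_centre [simp]: "1 \<in> centre"
  by (simp_all add: centre_def)

lemma centre_uminus: "a \<in> centre \<Longrightarrow> - a \<in> centre"
  by (simp add: centre_def)

lemma centre_add: "a \<in> centre \<Longrightarrow> b \<in> centre \<Longrightarrow> a + b \<in> centre"
  by (simp add: centre_def distrib_left distrib_right)

lemma centre_diff: "a \<in> centre \<Longrightarrow> b \<in> centre \<Longrightarrow> a - b \<in> centre"
  by (simp add: centre_def left_diff_distrib right_diff_distrib)

lemma centre_mult:
  assumes "a \<in> centre" "b \<in> centre"
  shows "a * b \<in> centre"
proof -
  have "a * b * x = x * (a * b)" for x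
  proof -
    have "a * b * x = a * (x * b)" by (simp add: mult.assoc centre_commute[OF assms(2)])
    also have "\<dots> = x * (a * b)" by (simp add: centre_left_commute[OF assms(1)] mult.assoc)
    finally show ?thesis .
  qed
  then show ?thesis by (simp add: centre_def)
qed

lemma simple_ring_one_neq_zero: "simple_ring TYPE('a::ring_1) \<Longrightarrow> (1::'a) \<noteq> 0"
  by (simp add: simple_ring_def)

lemma simple_ring_ideal:
  "simple_ring TYPE('a::ring_1) \<Longrightarrow> two_sided_ideal (I::'a set) \<Longrightarrow> I = {0} \<or> I = UNIV"
  by (simp add: simple_ring_def)

lemma two_sided_ideal_left_multiples:
  fixes w :: "'a::ring_1"
  assumes "\<And>t. \<exists>s. w * t = s * w"
  shows "two_sided_ideal (range (\<lambda>s. s * w))"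
  unfolding two_sided_ideal_def
proof (intro conjI ballI allI)
  have "0 = 0 * w" by simp
  then show "0 \<in> range (\<lambda>s. s * w)" by blast
next
  fix a b assume "a \<in> range (\<lambda>s. s * w)" "b \<in> range (\<lambda>s. s * w)"
  then obtain s s' where "a = s * w" "b = s' * w" by blast
  then have "a + b = (s + s') * w" by (simp add: distrib_right)
  then show "a + b \<in> range (\<lambda>s. s * w)" by blast
next
  fix a t assume "a \<in> range (\<lambda>s. s * w)"
  then obtain s where a: "a = s * w" by blast
  obtain s' where "w * t = s' * w" using assms by blast
  then have "a * t = (s * s') * w" by (simp add: a mult.assoc)
  then show "a * t \<in> range (\<lambda>s. s * w)" by blast
  have "t * a = (t * s) * w" by (simp add: a mult.assoc)
  then show "t * a \<in> range (\<lambda>s. s * w)" by blast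
  have "- a = (- s) * w" by (simp add: a)
  then show "- a \<in> range (\<lambda>s. s * w)" by blast
qed

lemma normalizing_element_left_invertible:
  fixes w :: "'a::ring_1"
  assumes "simple_ring TYPE('a)" and "\<And>t. \<exists>s. w * t = s * w" and "w \<noteq> 0"
  shows "\<exists>s. s * w = 1"
proof -
  have "w = 1 * w" by simp
  then have "w \<in> range (\<lambda>s. s * w)" by blast
  then have "range (\<lambda>s. s * w) = UNIV"
    using simple_ring_ideal[OF assms(1) two_sided_ideal_left_multiples[OF assms(2)]] assms(3)
    by blast
  then obtain s where "1 = s * w" by (metis UNIV_I imageE)
  then show ?thesis by metis
qed

lemma normalizing_square_zero_eq_0:
  fixes w :: "'a::ring_1"
  assumes "simple_ring TYPE('a)" and norm: "\<And>t. w * t = \<sigma> t * w" and "w * w = 0"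
  shows "w = 0"
proof (rule ccontr)
  assume "w \<noteq> 0"
  then obtain s where s: "s * w = 1"
    using normalizing_element_left_invertible[OF assms(1)] norm by blast
  have "w = (w * s) * w" by (simp add: s mult.assoc)
  also have "\<dots> = \<sigma> s * (w * w)" by (simp add: norm mult.assoc)
  finally show False using \<open>w * w = 0\<close> \<open>w \<noteq> 0\<close> by simp
qed

lemma central_unit:
  fixes z :: "'a::ring_1"
  assumes "simple_ring TYPE('a)" and z: "z \<in> centre" "z \<noteq> 0"
  shows "\<exists>s\<in>centre. z * s = 1"
proof -
  have "\<exists>s. z * t = s * z" for t using centre_commute[OF z(1)] by blast
  then obtain s where s: "s * z = 1"
    using normalizing_element_left_invertible[OF assms(1) _ z(2)] by blast
  then have zs: "z * s = 1" by (simp add: centre_commute[OF z(1)])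
  have "s * a = a * s" for a
  proof -
    have "s * a = s * a * (z * s)" by (simp add: zs)
    also have "\<dots> = s * (z * a) * s" by (simp add: centre_commute[OF z(1)] mult.assoc)
    also have "\<dots> = a * s" by (simp add: s mult.assoc[symmetric])
    finally show ?thesis .
  qed
  then show ?thesis using zs by (auto simp: centre_def)
qed

section \<open>Linear algebra over a central subfield\<close>

text \<open>The type as a HOL-Algebra ring, so that the dimension theory of
  \<^theory>\<open>HOL-Algebra.Embedded_Algebras\<close> applies to central subfields.\<close>
definition univ_ring :: "'a::ring_1 ring" where
  "univ_ring = \<lparr>carrier = UNIV, mult = (*), one = 1, zero = 0, add = (+)\<rparr>"

lemma univ_ring_simps [simp]:
  "carrier (univ_ring :: 'a::ring_1 ring) = UNIV" "mult univ_ring = (*)" "one univ_ring = 1"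
  "zero univ_ring = 0" "add univ_ring = (+)"
  by (simp_all add: univ_ring_def)

lemma ring_univ_ring: "ring (univ_ring :: 'a::ring_1 ring)"
proof (rule ringI)
  show "abelian_group (univ_ring :: 'a ring)"
    by (rule abelian_groupI) (auto simp: algebra_simps intro: exI[of _ "- _"])
  show "monoid (univ_ring :: 'a ring)"
    by (rule monoidI) (auto simp: mult.assoc)
qed (auto simp: algebra_simps)

lemma a_inv_univ_ring [simp]: "a_inv (univ_ring :: 'a::ring_1 ring) x = - x"
proof -
  interpret ring "univ_ring :: 'a ring" by (rule ring_univ_ring)
  show ?thesis using minus_equality[of "- x" x] by (simp add: add.commute)
qed

definition central_subfield :: "'a::ring_1 set \<Rightarrow> bool" where
  "central_subfield K \<longleftrightarrow> (1::'a) \<noteq> 0 \<and> K \<subseteq> centre \<and> 1 \<in> K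
     \<and> (\<forall>a\<in>K. \<forall>b\<in>K. a + b \<in> K \<and> a * b \<in> K) \<and> (\<forall>a\<in>K. - a \<in> K)
     \<and> (\<forall>a\<in>K. a \<noteq> 0 \<longrightarrow> (\<exists>b\<in>K. a * b = 1))"

lemma central_subfield_imp_subfield:
  assumes "central_subfield K"
  shows "subfield K univ_ring"
proof -
  interpret ring "univ_ring :: 'a ring" by (rule ring_univ_ring)
  have comm: "a * b = b * a" if "a \<in> K" for a b
    using assms that centre_commute unfolding central_subfield_def by blast
  have "subring K univ_ring"
    by (rule subringI) (use assms in \<open>auto simp: central_subfield_def\<close>)
  then have "subcring K univ_ring"
    by (rule subcringI) (simp add: comm)
  then show ?thesis
  proof (rule subfieldI)
    show "Units (univ_ring\<lparr>carrier := K\<rparr>) = K - {\<zero>\<^bsub>univ_ring\<^esub>}"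
      using assms comm by (auto simp: Units_def central_subfield_def)
  qed
qed

lemma central_subfield_centre:
  assumes "simple_ring TYPE('a::ring_1)"
  shows "central_subfield (centre :: 'a set)"
proof -
  have "\<forall>a\<in>centre. a \<noteq> 0 \<longrightarrow> (\<exists>b\<in>centre. a * b = (1::'a))"
    using central_unit[OF assms] by blast
  then show ?thesis
    unfolding central_subfield_def
    by (simp add: simple_ring_one_neq_zero[OF assms] centre_uminus centre_add centre_mult)
qed

lemma central_subfield_const_fun:
  assumes K: "central_subfield (K :: 'a::ring_1 set)"
  defines "K' \<equiv> (\<lambda>z. \<lambda>_::'b. z) ` K"
  shows "central_subfield K'"
  unfolding central_subfield_def
proof (intro conjI ballI impI subsetI)
  show "(1 :: 'b \<Rightarrow> 'a) \<noteq> 0" using K by (auto simp: central_subfield_def fun_eq_iff)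
  show "1 \<in> K'" using K by (auto simp: K'_def central_subfield_def one_fun_def)
next
  fix f assume "f \<in> K'"
  then obtain z where z: "z \<in> K" "f = (\<lambda>_. z)" by (auto simp: K'_def)
  then have zc: "z \<in> centre" using K by (auto simp: central_subfield_def)
  then show "f \<in> centre"
    unfolding centre_def by (simp add: z(2) fun_eq_iff centre_commute[OF zc])
  show "- f \<in> K'" using K z by (auto simp: K'_def central_subfield_def fun_eq_iff)
  fix g assume "g \<in> K'"
  then obtain y where y: "y \<in> K" "g = (\<lambda>_. y)" by (auto simp: K'_def)
  have "f + g = (\<lambda>_. z + y)" "f * g = (\<lambda>_. z * y)" by (auto simp: z(2) y(2))
  then show "f + g \<in> K'" "f * g \<in> K'"
    using K z(1) y(1) by (auto simp: K'_def central_subfield_def)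
next
  fix f assume "f \<in> K'" "f \<noteq> 0"
  then obtain z where z: "z \<in> K" "f = (\<lambda>_. z)" "z \<noteq> 0" by (auto simp: K'_def fun_eq_iff)
  then obtain y where "y \<in> K" "z * y = 1" using K by (auto simp: central_subfield_def)
  then show "\<exists>g\<in>K'. f * g = 1"
    by (intro bexI[of _ "\<lambda>_. y"]) (auto simp: K'_def z(2) fun_eq_iff)
qed

lemma combine_univ_ring:
  "ring.combine (univ_ring :: 'a::ring_1 ring) ks us = (\<Sum>l<min (length ks) (length us). ks!l * us!l)"
proof -
  interpret ring "univ_ring :: 'a ring" by (rule ring_univ_ring)
  show ?thesis
  proof (induction us arbitrary: ks)
    case Nil then show ?case by (cases ks) auto
  next
    case (Cons u us)
    then show ?case
      by (cases ks) (simp_all add: sum.lessThan_Suc_shift del: sum.lessThan_Suc)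
  qed
qed

context
  fixes K :: "'a::ring_1 set"
  assumes K: "subfield K univ_ring"
begin

interpretation ring "univ_ring :: 'a ring" by (rule ring_univ_ring)

declare Span.simps [simp del]

lemma independent_univ_ringD:
  assumes "independent K us" and "\<forall>l<length us. k l \<in> K" and "(\<Sum>l<length us. k l * us!l) = 0"
  shows "\<forall>l<length us. k l = 0"
proof -
  let ?ks = "map k [0..<length us]"
  have "set ?ks \<subseteq> K" "combine ?ks us = \<zero>\<^bsub>univ_ring\<^esub>"
    using assms(2,3) by (auto simp: combine_univ_ring)
  then have "set (take (length us) ?ks) \<subseteq> {\<zero>\<^bsub>univ_ring\<^esub>}"
    using independent_imp_trivial_combine[OF K assms(1)] by blast
  then show ?thesis by fastforce
qed

lemma independent_univ_ringI:
  assumes "\<And>k. \<forall>l<length us. k l \<in> K \<Longrightarrow> (\<Sum>l<length us. k l * us!l) = 0 \<Longrightarrow> \<forall>l<length us. k l = 0"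
  shows "independent K us"
proof (rule trivial_combine_imp_independent[OF K])
  show "set us \<subseteq> carrier univ_ring" by simp
  fix ks assume ks: "set ks \<subseteq> K" "combine ks us = \<zero>\<^bsub>univ_ring\<^esub>"
  define k where "k l = (if l < length ks then ks!l else 0)" for l
  have kK: "\<forall>l<length us. k l \<in> K"
    using ks(1) subringE(2)[OF subfieldE(1)[OF K]] by (auto simp: k_def)
  have "(\<Sum>l<length us. k l * us!l) = (\<Sum>l<min (length ks) (length us). ks!l * us!l)"
    by (rule sum.mono_neutral_cong_right) (auto simp: k_def)
  also have "\<dots> = 0" using ks(2) by (simp add: combine_univ_ring)
  finally have "\<forall>l<length us. k l = 0" using assms kK by blast
  then show "set (take (length us) ks) \<subseteq> {\<zero>\<^bsub>univ_ring\<^esub>}"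
    by (auto simp: set_conv_nth k_def)
qed

lemma Span_univ_ring:
  "Span K us = {(\<Sum>l<length us. k l * us!l) | k. \<forall>l<length us. k l \<in> K}"
proof -
  have "Span K us = {combine ks us | ks. length ks = length us \<and> set ks \<subseteq> K}"
    by (rule Span_eq_combine_set_length_version[OF K]) simp
  also have "\<dots> = {(\<Sum>l<length us. k l * us!l) | k. \<forall>l<length us. k l \<in> K}"
  proof safe
    fix ks :: "'a list" assume "length ks = length us" "set ks \<subseteq> K"
    then show "\<exists>k. combine ks us = (\<Sum>l<length us. k l * us!l) \<and> (\<forall>l<length us. k l \<in> K)"
      by (intro exI[of _ "\<lambda>l. ks!l"]) (auto simp: combine_univ_ring)
  next
    fix k assume "\<forall>l<length us. k l \<in> K"
    then show "\<exists>ks. (\<Sum>l<length us. k l * us!l) = combine ks us \<and> length ks = length us \<and> set ks \<subseteq> K"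
      by (intro exI[of _ "map k [0..<length us]"]) (auto simp: combine_univ_ring)
  qed
  finally show ?thesis .
qed

lemma Span_univ_ring_closed:
  shows zero_in_Span: "0 \<in> Span K us"
    and Span_add: "u \<in> Span K us \<Longrightarrow> v \<in> Span K us \<Longrightarrow> u + v \<in> Span K us"
    and Span_smult: "k \<in> K \<Longrightarrow> v \<in> Span K us \<Longrightarrow> k * v \<in> Span K us"
    and set_subset_Span: "set us \<subseteq> Span K us"
  using Span_subgroup_props(2,3)[OF K, of us] Span_smult_closed[OF K, of us]
    Span_base_incl[OF K, of us] by simp_all

lemma Span_sum:
  "\<forall>l<(N::nat). k l \<in> K \<Longrightarrow> \<forall>l<N. v l \<in> Span K us \<Longrightarrow> (\<Sum>l<N. k l * v l) \<in> Span K us"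
  by (induction N) (auto intro!: zero_in_Span Span_add Span_smult)

lemma Span_sum_closed: "\<forall>l<(N::nat). v l \<in> Span K us \<Longrightarrow> (\<Sum>l<N. v l) \<in> Span K us"
  by (induction N) (auto intro!: zero_in_Span Span_add)

lemma Span_linear_inj_imp_surj:
  fixes T :: "'a \<Rightarrow> 'a"
  assumes maps_to: "\<And>v. v \<in> Span K us \<Longrightarrow> T v \<in> Span K us"
    and add: "\<And>u v. u \<in> Span K us \<Longrightarrow> v \<in> Span K us \<Longrightarrow> T (u + v) = T u + T v"
    and smult: "\<And>k v. k \<in> K \<Longrightarrow> v \<in> Span K us \<Longrightarrow> T (k * v) = k * T v"
    and inj: "\<And>v. v \<in> Span K us \<Longrightarrow> T v = 0 \<Longrightarrow> v = 0"
    and t: "t \<in> Span K us"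
  shows "\<exists>v\<in>Span K us. T v = t"
proof -
  let ?V = "Span K us"
  obtain bs where bs: "independent K bs" "Span K bs = ?V"
    using filter_base[OF K, of us] by auto
  have bsV: "\<forall>l<length bs. bs!l \<in> ?V"
    using set_subset_Span[of bs] bs(2) by auto
  have T0: "T 0 = 0"
    using add[of 0 0] zero_in_Span by simp
  have T_sum: "T (\<Sum>l<N. k l * v l) = (\<Sum>l<N. k l * T (v l))"
    if "\<forall>l<N. k l \<in> K" "\<forall>l<N. v l \<in> ?V" for N :: nat and k v
    using that
  proof (induction N)
    case (Suc N)
    have "T (\<Sum>l<Suc N. k l * v l) = T (\<Sum>l<N. k l * v l) + T (k N * v N)"
      using Suc.prems by (simp, intro add Span_sum Span_smult) auto
    then show ?case using Suc by (simp add: smult)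
  qed (simp add: T0)
  have indep: "independent K (map T bs)"
  proof (rule independent_univ_ringI)
    fix k assume kK: "\<forall>l<length (map T bs). k l \<in> K"
      and "(\<Sum>l<length (map T bs). k l * map T bs ! l) = 0"
    then have "T (\<Sum>l<length bs. k l * bs!l) = 0"
      using bsV by (simp add: T_sum)
    then have "(\<Sum>l<length bs. k l * bs!l) = 0"
      using inj Span_sum[of "length bs" k "\<lambda>l. bs!l"] kK bsV by auto
    then show "\<forall>l<length (map T bs). k l = 0"
      using independent_univ_ringD[OF bs(1)] kK by auto
  qed
  have dim: "dimension (length bs) K ?V"
    using dimensionI[OF K bs(1)] bs(2) by simp
  have "set (map T bs) \<subseteq> ?V" using maps_to bsV by (auto simp: set_conv_nth)
  then have "Span K (map T bs) = ?V"
    using independent_length_eq_dimension[OF K dim indep] by simp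
  then have "t \<in> Span K (map T bs)" using t by simp
  then obtain k where kK: "\<forall>l<length bs. k l \<in> K" and tk: "t = (\<Sum>l<length bs. k l * T (bs!l))"
    unfolding Span_univ_ring by auto
  then have "T (\<Sum>l<length bs. k l * bs!l) = t"
    using T_sum[of "length bs" k "\<lambda>l. bs!l"] bsV by simp
  moreover have "(\<Sum>l<length bs. k l * bs!l) \<in> ?V"
    using Span_sum kK bsV by auto
  ultimately show ?thesis by blast
qed

end

section \<open>Twisted derivations of central simple algebras are inner\<close>

definition centre_independent :: "(nat \<Rightarrow> 'a::ring_1) \<Rightarrow> nat \<Rightarrow> bool" where
  "centre_independent e r \<longleftrightarrow>
     (\<forall>k. (\<forall>l<r. k l \<in> centre) \<longrightarrow> (\<Sum>l<r. k l * e l) = 0 \<longrightarrow> (\<forall>l<r. k l = 0))"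

definition centre_basis :: "(nat \<Rightarrow> 'a::ring_1) \<Rightarrow> nat \<Rightarrow> bool" where
  "centre_basis e r \<longleftrightarrow> centre_independent e r
     \<and> (\<forall>a. \<exists>k. (\<forall>l<r. k l \<in> centre) \<and> a = (\<Sum>l<r. k l * e l))"

lemma centre_basis_independent: "centre_basis e r \<Longrightarrow> centre_independent e r"
  by (simp add: centre_basis_def)

lemma centre_independentD:
  assumes "centre_independent e r" "\<forall>l<r. k l \<in> centre" "(\<Sum>l<r. k l * e l) = 0" "l < r"
  shows "k l = 0"
  using assms(1)[unfolded centre_independent_def, rule_format, of k l] assms(2-4) by simp

lemma centre_independent_Suc:
  fixes e :: "nat \<Rightarrow> 'a::ring_1"
  assumes ind: "centre_independent e (Suc r)" and one: "(1::'a) \<noteq> 0"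
  shows "centre_independent e r"
    and "\<forall>l<r. k l \<in> centre \<Longrightarrow> e r \<noteq> (\<Sum>l<r. k l * e l)"
proof -
  show "centre_independent e r"
    unfolding centre_independent_def
  proof (intro allI impI)
    fix k l assume kc: "\<forall>l<r. k l \<in> centre" and k: "(\<Sum>l<r. k l * e l) = 0" and l: "l < r"
    define k' where "k' l = (if l < r then k l else 0)" for l
    have "\<forall>l<Suc r. k' l \<in> centre" using kc by (simp add: k'_def)
    moreover have "(\<Sum>l<Suc r. k' l * e l) = 0" using k by (simp add: k'_def)
    moreover have "l < Suc r" using l by simp
    ultimately have "k' l = 0" by (rule centre_independentD[OF ind])
    then show "k l = 0" using l by (simp add: k'_def)
  qed
  assume kc: "\<forall>l<r. k l \<in> centre"
  show "e r \<noteq> (\<Sum>l<r. k l * e l)"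
  proof
    assume er: "e r = (\<Sum>l<r. k l * e l)"
    define k' where "k' l = (if l < r then - k l else 1)" for l
    have "\<forall>l<Suc r. k' l \<in> centre" using kc by (simp add: k'_def centre_uminus)
    moreover have "(\<Sum>l<Suc r. k' l * e l) = 0"
      using er by (simp add: k'_def sum_negf)
    ultimately have "k' r = 0" by (rule centre_independentD[OF ind]) simp
    then show False using one by (simp add: k'_def)
  qed
qed

lemma two_sided_ideal_sandwich_solutions:
  fixes e :: "nat \<Rightarrow> 'a::ring_1"
  shows "two_sided_ideal {y. \<exists>w. \<forall>a. (\<Sum>l<r. e l * a * w l) + c * a * y = 0}"
    (is "two_sided_ideal {y. \<exists>w. \<forall>a. ?S w y a = 0}")
  unfolding two_sided_ideal_def
proof (intro conjI ballI allI)
  show "0 \<in> {y. \<exists>w. \<forall>a. ?S w y a = 0}" by (auto intro: exI[of _ "\<lambda>_. 0"])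
next
  fix y1 y2 assume "y1 \<in> {y. \<exists>w. \<forall>a. ?S w y a = 0}" "y2 \<in> {y. \<exists>w. \<forall>a. ?S w y a = 0}"
  then obtain w1 w2 where "\<forall>a. ?S w1 y1 a = 0" "\<forall>a. ?S w2 y2 a = 0" by blast
  moreover have "?S (\<lambda>l. w1 l + w2 l) (y1 + y2) a = ?S w1 y1 a + ?S w2 y2 a" for a
    by (simp add: sum.distrib algebra_simps)
  ultimately have "\<forall>a. ?S (\<lambda>l. w1 l + w2 l) (y1 + y2) a = 0" by simp
  then show "y1 + y2 \<in> {y. \<exists>w. \<forall>a. ?S w y a = 0}"
    by (intro CollectI exI[of _ "\<lambda>l. w1 l + w2 l"])
next
  fix y assume "y \<in> {y. \<exists>w. \<forall>a. ?S w y a = 0}"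
  then obtain w where w: "\<forall>a. ?S w y a = 0" by blast
  have "?S (\<lambda>l. - w l) (- y) a = - ?S w y a" for a by (simp add: sum_negf)
  then show "- y \<in> {y. \<exists>w. \<forall>a. ?S w y a = 0}"
    using w by (intro CollectI exI[of _ "\<lambda>l. - w l"]) simp
  fix t
  have "?S (\<lambda>l. t * w l) (t * y) a = ?S w y (a * t)" for a by (simp add: mult.assoc)
  then show "t * y \<in> {y. \<exists>w. \<forall>a. ?S w y a = 0}"
    using w by (intro CollectI exI[of _ "\<lambda>l. t * w l"]) simp
  have "?S (\<lambda>l. w l * t) (y * t) a = ?S w y a * t" for a
    by (simp add: mult.assoc distrib_right sum_distrib_right)
  then show "y * t \<in> {y. \<exists>w. \<forall>a. ?S w y a = 0}"
    using w by (intro CollectI exI[of _ "\<lambda>l. w l * t"]) simp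
qed

lemma sandwich_eq_0:
  fixes e v :: "nat \<Rightarrow> 'a::ring_1"
  assumes simple: "simple_ring TYPE('a)"
    and "centre_independent e r" and "\<forall>a. (\<Sum>l<r. e l * a * v l) = 0"
  shows "\<forall>l<r. v l = 0"
  using assms(2,3)
proof (induction r arbitrary: v)
  case (Suc r)
  note ind = centre_independent_Suc[OF Suc.prems(1) simple_ring_one_neq_zero[OF simple]]
  let ?J = "{y. \<exists>w. \<forall>a. (\<Sum>l<r. e l * a * w l) + e r * a * y = 0}"
  \<comment> \<open>\<open>v r\<close> lies in the ideal \<open>?J\<close>; if \<open>1 \<in> ?J\<close>, the induction hypothesis would make the
    corresponding coefficients central and \<open>e r\<close> a central combination of the other \<open>e l\<close>.\<close>
  have "1 \<notin> ?J"
  proof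
    assume "1 \<in> ?J"
    then obtain w where w: "\<forall>a. (\<Sum>l<r. e l * a * w l) + e r * a = 0" by auto
    have "\<forall>l<r. y * w l - w l * y = 0" for y
    proof (rule Suc.IH[OF ind(1)], rule allI)
      fix a
      have "(\<Sum>l<r. e l * a * (y * w l - w l * y))
          = ((\<Sum>l<r. e l * (a * y) * w l) + e r * (a * y)) - ((\<Sum>l<r. e l * a * w l) + e r * a) * y"
        by (simp add: right_diff_distrib sum_subtractf distrib_right sum_distrib_right mult.assoc)
      then show "(\<Sum>l<r. e l * a * (y * w l - w l * y)) = 0" using w by simp
    qed
    then have wc: "\<forall>l<r. - w l \<in> centre" by (simp add: centre_def centre_uminus)
    have "e r = - (\<Sum>l<r. e l * w l)"
      using w[rule_format, of 1] by (simp add: eq_neg_iff_add_eq_0 add.commute)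
    also have "\<dots> = (\<Sum>l<r. - w l * e l)"
      by (simp add: sum_negf[symmetric]) (rule sum.cong, simp, use wc in \<open>simp add: centre_def\<close>)
    finally show False using ind(2)[OF wc] by blast
  qed
  moreover have "?J = {0} \<or> ?J = UNIV"
    by (rule simple_ring_ideal[OF simple two_sided_ideal_sandwich_solutions])
  ultimately have "?J = {0}" by blast
  moreover have "v r \<in> ?J" using Suc.prems(2) by (intro CollectI exI[of _ v]) simp
  ultimately have vr: "v r = 0" by blast
  then have "\<forall>l<r. v l = 0" using Suc.prems(2) by (intro Suc.IH[OF ind(1)]) simp
  then show ?case using vr less_Suc_eq by auto
qed simp

lemma central_simple_basis_with_one:
  assumes cs: "central_simple TYPE('a::ring_1)"
  shows "\<exists>e r. centre_basis (e :: nat \<Rightarrow> 'a) r \<and> 0 < r \<and> e (r - 1) = 1"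
proof -
  have simple: "simple_ring TYPE('a)" using cs by (simp add: central_simple_def)
  have K: "subfield (centre :: 'a set) univ_ring"
    by (rule central_subfield_imp_subfield[OF central_subfield_centre[OF simple]])
  interpret ring "univ_ring :: 'a ring" by (rule ring_univ_ring)
  obtain B :: "'a set" where "finite B"
    and B: "\<forall>a. \<exists>f. (\<forall>b\<in>B. f b \<in> centre) \<and> a = (\<Sum>b\<in>B. f b * b)"
    using cs by (auto simp: central_simple_def)
  then obtain us where us: "set us = B" "distinct us" using finite_distinct_list by blast
  have "a \<in> Span centre us" for a
  proof -
    obtain f where f: "\<forall>b\<in>B. f b \<in> centre" "a = (\<Sum>b\<in>B. f b * b)" using B by blast
    have "a = (\<Sum>l<length us. f (us!l) * us!l)"
      using f(2) sum.reindex_bij_betw[OF bij_betw_nth[OF us(2) refl us(1)[symmetric]],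
          of "\<lambda>b. f b * b"] by simp
    moreover have "\<forall>l<length us. f (us!l) \<in> centre" using f(1) us(1) by auto
    ultimately show ?thesis
      unfolding Span_univ_ring[OF K] by (intro CollectI exI[of _ "\<lambda>l. f (us!l)"]) blast
  qed
  then have span: "Span centre us = UNIV" by blast
  obtain vs where "independent centre vs" "Span centre vs = Span centre us"
    using filter_base[OF K, of us] by auto
  then have dim: "dimension (length vs) centre UNIV"
    using dimensionI[OF K] span by simp
  have one: "independent centre [1::'a]"
    by (rule li_Cons) (use simple_ring_one_neq_zero[OF simple] in auto)
  obtain ws where ws: "independent centre (ws @ [1])" "Span centre (ws @ [1]) = UNIV"
    using complete_base[OF K dim one] by auto
  define e where "e l = (ws @ [1]) ! l" for l
  define r where "r = length (ws @ [1::'a])"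
  have "centre_independent e r"
    unfolding centre_independent_def e_def r_def
    using independent_univ_ringD[OF K ws(1)] by blast
  moreover have "\<exists>k. (\<forall>l<r. k l \<in> centre) \<and> a = (\<Sum>l<r. k l * e l)" for a
  proof -
    have "a \<in> Span centre (ws @ [1])" using ws(2) by simp
    then show ?thesis unfolding Span_univ_ring[OF K] e_def r_def by blast
  qed
  moreover have "0 < r" "e (r - 1) = 1" by (simp_all add: e_def r_def nth_append)
  ultimately show ?thesis unfolding centre_basis_def by blast
qed

definition centre_coords :: "(nat \<Rightarrow> 'a::ring_1) \<Rightarrow> nat \<Rightarrow> 'a \<Rightarrow> nat \<Rightarrow> 'a" where
  "centre_coords e r a = (SOME k. (\<forall>l<r. k l \<in> centre) \<and> a = (\<Sum>l<r. k l * e l))"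

lemma centre_coords:
  assumes "centre_basis e r"
  shows "(\<forall>l<r. centre_coords e r a l \<in> centre) \<and> (\<Sum>l<r. centre_coords e r a l * e l) = a"
proof -
  have "\<exists>k. (\<forall>l<r. k l \<in> centre) \<and> a = (\<Sum>l<r. k l * e l)"
    using assms by (simp add: centre_basis_def)
  then have "(\<forall>l<r. centre_coords e r a l \<in> centre) \<and> a = (\<Sum>l<r. centre_coords e r a l * e l)"
    unfolding centre_coords_def by (rule someI_ex)
  then show ?thesis by simp
qed

lemma centre_coords_in_centre: "centre_basis e r \<Longrightarrow> l < r \<Longrightarrow> centre_coords e r a l \<in> centre"
  and sum_centre_coords: "centre_basis e r \<Longrightarrow> (\<Sum>l<r. centre_coords e r a l * e l) = a"
  using centre_coords by blast+

lemma centre_coords_unique: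
  assumes basis: "centre_basis e r"
    and k: "\<forall>l<r. k l \<in> centre" "a = (\<Sum>l<r. k l * e l)" and "l < r"
  shows "centre_coords e r a l = k l"
proof -
  note ind = centre_basis_independent[OF basis]
  have sum: "(\<Sum>l<r. (centre_coords e r a l - k l) * e l) = 0"
    using k(2) by (simp add: left_diff_distrib sum_subtractf sum_centre_coords[OF basis])
  have "\<forall>l<r. centre_coords e r a l - k l \<in> centre"
    using k(1) by (simp add: centre_coords_in_centre[OF basis] centre_diff)
  from centre_independentD[OF ind this sum \<open>l < r\<close>] show ?thesis by simp
qed

lemma sandwich_centre_combination:
  assumes "\<forall>k<r. c k \<in> centre"
  shows "(\<Sum>j<n. e j * (\<Sum>k<r. c k * f k) * w j) = (\<Sum>k<r. c k * (\<Sum>j<n. e j * f k * w j))"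
proof -
  have "(\<Sum>j<n. e j * (\<Sum>k<r. c k * f k) * w j) = (\<Sum>j<n. \<Sum>k<r. e j * (c k * f k) * w j)"
    by (simp add: sum_distrib_left sum_distrib_right)
  also have "\<dots> = (\<Sum>j<n. \<Sum>k<r. c k * (e j * f k * w j))"
    using assms by (intro sum.cong refl) (simp add: centre_left_commute mult.assoc)
  also have "\<dots> = (\<Sum>k<r. c k * (\<Sum>j<n. e j * f k * w j))"
    by (subst sum.swap) (simp add: sum_distrib_left)
  finally show ?thesis .
qed

lemma sum_fun_apply: "(\<Sum>i<(N::nat). f i) x = (\<Sum>i<N. f i x)"
  by (induction N) auto

text \<open>The vectors of \<open>A\<^sup>r\<close>, modelled as functions vanishing from \<open>r\<close> on, with a single
  nonzero entry \<open>e j\<close> at position \<open>i\<close>.\<close>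
definition unit_vectors :: "(nat \<Rightarrow> 'a::ring_1) \<Rightarrow> nat \<Rightarrow> (nat \<Rightarrow> 'a) list" where
  "unit_vectors e r = map (\<lambda>p i. if i = p div r then e (p mod r) else 0) [0..<r * r]"

lemma Span_unit_vectors:
  fixes e :: "nat \<Rightarrow> 'a::ring_1"
  assumes simple: "simple_ring TYPE('a)" and basis: "centre_basis e r"
  defines "K \<equiv> (\<lambda>z. \<lambda>_::nat. z) ` centre"
  shows "ring.Span univ_ring K (unit_vectors e r) = {w. \<forall>i\<ge>r. w i = 0}"
proof -
  have K: "subfield K univ_ring" unfolding K_def
    by (intro central_subfield_imp_subfield central_subfield_const_fun central_subfield_centre simple)
  let ?S = "unit_vectors e r"
  let ?V = "ring.Span univ_ring K ?S"
  have nth_S: "p < r * r \<Longrightarrow> ?S ! p = (\<lambda>s. if s = p div r then e (p mod r) else 0)" for p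
    by (simp add: unit_vectors_def cong: if_cong)
  have S_in_Span: "(\<lambda>s. if s = i then e j else 0) \<in> ?V" if "i < r" "j < r" for i j
  proof -
    have "i * r + j < Suc i * r" using that by simp
    also have "\<dots> \<le> r * r" using that by (intro mult_le_mono1) simp
    finally have p: "i * r + j < r * r" .
    then have "?S ! (i * r + j) \<in> set ?S" by (intro nth_mem) (simp add: unit_vectors_def)
    moreover have "?S ! (i * r + j) = (\<lambda>s. if s = i then e j else 0)"
      using nth_S[OF p] that by (simp cong: if_cong)
    ultimately show ?thesis using subsetD[OF set_subset_Span[OF K]] by metis
  qed
  show ?thesis
  proof (intro equalityI subsetI)
    fix w assume "w \<in> ?V"
    then obtain k where "w = (\<Sum>p<length ?S. k p * ?S ! p)"
      unfolding Span_univ_ring[OF K] by blast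
    then have w: "w = (\<Sum>p<r * r. k p * ?S ! p)" by (simp add: unit_vectors_def)
    have "(?S ! p) i = 0" if "p < r * r" "r \<le> i" for p i
      using that less_mult_imp_div_less[of p r r] by (auto simp: nth_S)
    then show "w \<in> {w. \<forall>i\<ge>r. w i = 0}" by (simp add: w sum_fun_apply)
  next
    fix w :: "nat \<Rightarrow> 'a" assume "w \<in> {w. \<forall>i\<ge>r. w i = 0}"
    then have w: "\<forall>i\<ge>r. w i = 0" by simp
    let ?c = "\<lambda>i j. centre_coords e r (w i) j"
    have "w = (\<Sum>i<r. \<Sum>j<r. (\<lambda>_. ?c i j) * (\<lambda>s. if s = i then e j else 0))"
    proof
      fix s
      have "(\<Sum>i<r. \<Sum>j<r. (\<lambda>_. ?c i j) * (\<lambda>s. if s = i then e j else 0)) s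
          = (\<Sum>i<r. if s = i then (\<Sum>j<r. ?c i j * e j) else 0)"
        unfolding sum_fun_apply by (intro sum.cong refl) auto
      also have "\<dots> = w s" using w by (simp add: sum_centre_coords[OF basis] not_less)
      finally show "w s = (\<Sum>i<r. \<Sum>j<r. (\<lambda>_. ?c i j) * (\<lambda>s. if s = i then e j else 0)) s" ..
    qed
    also have "\<dots> \<in> ?V"
      using centre_coords_in_centre[OF basis] S_in_Span
      by (intro Span_sum_closed[OF K] allI impI Span_sum[OF K]) (auto simp: K_def)
    finally show "w \<in> ?V" .
  qed
qed

lemma sandwich_map_surj:
  fixes e :: "nat \<Rightarrow> 'a::ring_1"
  assumes simple: "simple_ring TYPE('a)" and basis: "centre_basis e r"
  shows "\<exists>w. \<forall>k<r. (\<Sum>j<r. e j * e k * w j) = t k"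
proof -
  define K where "K = (\<lambda>z. \<lambda>_::nat. z) ` (centre :: 'a set)"
  have K: "subfield K univ_ring" unfolding K_def
    by (intro central_subfield_imp_subfield central_subfield_const_fun central_subfield_centre simple)
  let ?V = "ring.Span univ_ring K (unit_vectors e r)"
  have V: "w \<in> ?V \<longleftrightarrow> (\<forall>i\<ge>r. w i = 0)" for w
    using Span_unit_vectors[OF simple basis] by (simp add: K_def)
  define M where "M w = (\<lambda>k. if k < r then \<Sum>j<r. e j * e k * w j else 0)" for w
  have "\<exists>w\<in>?V. M w = (\<lambda>k. if k < r then t k else 0)"
  proof (rule Span_linear_inj_imp_surj[OF K])
    show "M w \<in> ?V" for w by (simp add: V M_def)
    show "M (u + w) = M u + M w" for u w
      by (simp add: M_def fun_eq_iff distrib_left sum.distrib)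
    show "M (k * w) = k * M w" if "k \<in> K" for k w
    proof -
      obtain z where z: "z \<in> centre" "k = (\<lambda>_. z)" using \<open>k \<in> K\<close> by (auto simp: K_def)
      have "(\<Sum>j<r. e j * e i * (z * w j)) = z * (\<Sum>j<r. e j * e i * w j)" for i
        unfolding sum_distrib_left by (intro sum.cong refl) (simp add: centre_left_commute[OF z(1)])
      then show ?thesis by (simp add: M_def z(2) fun_eq_iff)
    qed
    show "w = 0" if "w \<in> ?V" and Mw: "M w = 0" for w
    proof -
      have "(\<Sum>j<r. e j * a * w j) = 0" for a
      proof -
        have "(\<Sum>j<r. e j * a * w j)
            = (\<Sum>j<r. e j * (\<Sum>k<r. centre_coords e r a k * e k) * w j)"
          by (simp add: sum_centre_coords[OF basis])
        also have "\<dots> = (\<Sum>k<r. centre_coords e r a k * M w k)"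
          using centre_coords_in_centre[OF basis]
          by (simp add: sandwich_centre_combination M_def)
        finally show ?thesis by (simp add: Mw)
      qed
      then have "\<forall>j<r. w j = 0"
        using sandwich_eq_0[OF simple centre_basis_independent[OF basis]] by blast
      then show "w = 0" using \<open>w \<in> ?V\<close> by (auto simp: V fun_eq_iff not_le[symmetric])
    qed
    show "(\<lambda>k. if k < r then t k else 0) \<in> ?V" by (simp add: V)
  qed
  then obtain w where w: "M w = (\<lambda>k. if k < r then t k else 0)" by blast
  have "(\<Sum>j<r. e j * e k * w j) = t k" if "k < r" for k
    using fun_cong[OF w, of k] that by (simp add: M_def)
  then show ?thesis by blast
qed

lemma central_trace_exists:
  assumes cs: "central_simple TYPE('a::ring_1)"
  shows "\<exists>(e :: nat \<Rightarrow> 'a) r w. centre_basis e r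
           \<and> (\<forall>a. (\<Sum>j<r. e j * a * w j) \<in> centre) \<and> (\<Sum>j<r. e j * w j) = 1"
proof -
  have simple: "simple_ring TYPE('a)" using cs by (simp add: central_simple_def)
  obtain e :: "nat \<Rightarrow> 'a" and r where basis: "centre_basis e r" and "0 < r" and er: "e (r - 1) = 1"
    using central_simple_basis_with_one[OF cs] by blast
  define \<delta> :: "nat \<Rightarrow> 'a" where "\<delta> k = (if k = r - 1 then 1 else 0)" for k
  obtain w where w: "\<forall>k<r. (\<Sum>j<r. e j * e k * w j) = \<delta> k"
    using sandwich_map_surj[OF simple basis] by blast
  have trace: "(\<Sum>j<r. e j * a * w j) = centre_coords e r a (r - 1)" for a
  proof -
    have "(\<Sum>j<r. e j * a * w j) = (\<Sum>j<r. e j * (\<Sum>k<r. centre_coords e r a k * e k) * w j)"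
      by (simp add: sum_centre_coords[OF basis])
    also have "\<dots> = (\<Sum>k<r. centre_coords e r a k * \<delta> k)"
      using centre_coords_in_centre[OF basis] w by (simp add: sandwich_centre_combination)
    also have "\<dots> = centre_coords e r a (r - 1)"
      using \<open>0 < r\<close> by (simp add: \<delta>_def if_distrib cong: if_cong)
    finally show ?thesis .
  qed
  have "centre_coords e r 1 (r - 1) = \<delta> (r - 1)"
  proof (rule centre_coords_unique[OF basis])
    show "\<forall>l<r. \<delta> l \<in> centre" by (simp add: \<delta>_def)
    have "(\<Sum>l<r. \<delta> l * e l) = (\<Sum>l<r. if l = r - 1 then e l else 0)"
      by (intro sum.cong refl) (simp add: \<delta>_def)
    then show "1 = (\<Sum>l<r. \<delta> l * e l)" using \<open>0 < r\<close> er by simp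
  qed (use \<open>0 < r\<close> in simp)
  then have "(\<Sum>j<r. e j * w j) = 1" using trace[of 1] by (simp add: \<delta>_def)
  moreover have "\<forall>a. (\<Sum>j<r. e j * a * w j) \<in> centre"
    using trace centre_coords_in_centre[OF basis] \<open>0 < r\<close> by simp
  ultimately show ?thesis using basis by blast
qed

lemma sandwich_right_mult:
  fixes e w :: "nat \<Rightarrow> 'a::ring_1"
  assumes simple: "simple_ring TYPE('a)" and basis: "centre_basis e r"
    and central: "\<forall>a. (\<Sum>j<r. e j * a * w j) \<in> centre" and "l < r"
  shows "w l * b = (\<Sum>j<r. centre_coords e r (b * e j) l * w j)"
proof -
  let ?c = "\<lambda>j l. centre_coords e r (b * e j) l"
  have "\<forall>l<r. (\<Sum>j<r. ?c j l * w j) - w l * b = 0"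
  proof (rule sandwich_eq_0[OF simple centre_basis_independent[OF basis]], rule allI)
    fix a
    have "(\<Sum>l<r. e l * a * (\<Sum>j<r. ?c j l * w j)) = (\<Sum>l<r. \<Sum>j<r. ?c j l * (e l * a * w j))"
      unfolding sum_distrib_left
    proof (intro sum.cong refl)
      fix l j assume "l \<in> {..<r}"
      then have "?c j l \<in> centre" by (simp add: centre_coords_in_centre[OF basis])
      from centre_left_commute[OF this] show "e l * a * (?c j l * w j) = ?c j l * (e l * a * w j)"
        by (simp add: mult.assoc)
    qed
    also have "\<dots> = (\<Sum>j<r. \<Sum>l<r. ?c j l * (e l * a * w j))"
      by (rule sum.swap)
    also have "\<dots> = (\<Sum>j<r. (\<Sum>l<r. ?c j l * e l) * a * w j)"
      by (simp add: sum_distrib_right mult.assoc)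
    also have "\<dots> = b * (\<Sum>j<r. e j * a * w j)"
      by (simp add: sum_centre_coords[OF basis] sum_distrib_left mult.assoc)
    also have "\<dots> = (\<Sum>j<r. e j * a * w j) * b"
      using central centre_commute by metis
    finally show "(\<Sum>l<r. e l * a * ((\<Sum>j<r. ?c j l * w j) - w l * b)) = 0"
      by (simp add: right_diff_distrib sum_subtractf sum_distrib_right mult.assoc)
  qed
  then show ?thesis using \<open>l < r\<close> by simp
qed

lemma additive_sum:
  fixes f :: "'a::ab_group_add \<Rightarrow> 'b::ab_group_add"
  assumes "\<And>a b. f (a + b) = f a + f b"
  shows "f (\<Sum>i\<in>A. g i) = (\<Sum>i\<in>A. f (g i))"
proof -
  have "f 0 = 0" using assms[of 0 0] by simp
  then show ?thesis using sum_comp_morphism[of f g A] assms by (simp add: comp_def)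
qed

theorem twisted_derivation_inner:
  fixes \<sigma> X :: "'a::ring_1 \<Rightarrow> 'a"
  assumes cs: "central_simple TYPE('a)"
    and \<sigma>_add: "\<And>a b. \<sigma> (a + b) = \<sigma> a + \<sigma> b" and \<sigma>_mult: "\<And>a b. \<sigma> (a * b) = \<sigma> a * \<sigma> b"
    and \<sigma>_centre: "\<And>z. z \<in> centre \<Longrightarrow> \<sigma> z = z"
    and X_add: "\<And>a b. X (a + b) = X a + X b"
    and X_centre: "\<And>z a. z \<in> centre \<Longrightarrow> X (z * a) = z * X a"
    and X_twisted: "\<And>a b. X (a * b) = X a * b + \<sigma> a * X b"
  shows "\<exists>c. \<forall>a. X a = c * a - \<sigma> a * c"
proof -
  have simple: "simple_ring TYPE('a)" using cs by (simp add: central_simple_def)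
  obtain e w :: "nat \<Rightarrow> 'a" and r where basis: "centre_basis e r"
    and central: "\<forall>a. (\<Sum>j<r. e j * a * w j) \<in> centre" and one: "(\<Sum>j<r. e j * w j) = 1"
    using central_trace_exists[OF cs] by blast
  let ?c = "\<lambda>b j l. centre_coords e r (b * e j) l"
  \<comment> \<open>the image of the element \<open>\<Sum> e l \<otimes> w l\<close> of \<open>A \<otimes> A\<^sup>o\<^sup>p\<close> under \<open>\<sigma> \<otimes> X\<close>\<close>
  define d where "d = (\<Sum>l<r. \<sigma> (e l) * X (w l))"
  have "d * b = \<sigma> b * d - X b" for b
  proof -
    have "(\<Sum>l<r. \<sigma> (e l) * X (w l * b)) = (\<Sum>l<r. \<Sum>j<r. \<sigma> (e l) * (?c b j l * X (w j)))"
      using sandwich_right_mult[OF simple basis central]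
      by (intro sum.cong refl) (simp add: additive_sum[where f = X, OF X_add] X_centre
          centre_coords_in_centre[OF basis] sum_distrib_left)
    also have "\<dots> = (\<Sum>j<r. \<Sum>l<r. \<sigma> (?c b j l * e l) * X (w j))"
    proof (subst sum.swap, intro sum.cong refl)
      fix j l assume "l \<in> {..<r}"
      then have c: "?c b j l \<in> centre" by (simp add: centre_coords_in_centre[OF basis])
      then show "\<sigma> (e l) * (?c b j l * X (w j)) = \<sigma> (?c b j l * e l) * X (w j)"
        by (simp add: \<sigma>_mult \<sigma>_centre centre_left_commute[OF c] mult.assoc)
    qed
    also have "\<dots> = (\<Sum>j<r. \<sigma> (\<Sum>l<r. ?c b j l * e l) * X (w j))"
      by (simp add: additive_sum[where f = \<sigma>, OF \<sigma>_add] sum_distrib_right)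
    also have "\<dots> = \<sigma> b * d"
      by (simp add: sum_centre_coords[OF basis] d_def \<sigma>_mult sum_distrib_left mult.assoc)
    finally have "(\<Sum>l<r. \<sigma> (e l) * X (w l * b)) = \<sigma> b * d" .
    moreover have "(\<Sum>l<r. \<sigma> (e l) * \<sigma> (w l)) = \<sigma> (\<Sum>l<r. e l * w l)"
      by (simp add: additive_sum[where f = \<sigma>, OF \<sigma>_add] \<sigma>_mult)
    then have "(\<Sum>l<r. \<sigma> (e l) * \<sigma> (w l)) = 1" using one \<sigma>_centre[of 1] by simp
    moreover have "d * b = (\<Sum>l<r. \<sigma> (e l) * X (w l * b)) - (\<Sum>l<r. \<sigma> (e l) * \<sigma> (w l)) * X b"
      by (simp add: d_def X_twisted sum_distrib_right distrib_left sum.distrib mult.assoc)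
    ultimately show ?thesis by simp
  qed
  then have "X a = (- d) * a - \<sigma> a * (- d)" for a by (simp add: algebra_simps)
  then show ?thesis by blast
qed

section \<open>Gaussian coefficients at roots of unity\<close>

text \<open>\<open>esym q k j\<close> is the \<open>j\<close>-th elementary symmetric polynomial in \<open>1, q, \<dots>, q\<^sup>k\<^sup>-\<^sup>1\<close>,
  i.e. \<open>q\<^sup>j\<^sup>(\<^sup>j\<^sup>-\<^sup>1\<^sup>)\<^sup>/\<^sup>2\<close> times the Gaussian binomial coefficient \<open>[k choose j]\<^sub>q\<close>.\<close>
fun esym :: "'a::comm_ring_1 \<Rightarrow> nat \<Rightarrow> nat \<Rightarrow> 'a" where
  "esym q 0 j = (if j = 0 then 1 else 0)"
| "esym q (Suc k) j = (if j = 0 then 1 else esym q k j + q ^ k * esym q k (j - 1))"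

lemma esym_0 [simp]: "esym q k 0 = 1"
  by (cases k) auto

lemma esym_eq_0_if_less: "k < j \<Longrightarrow> esym q k j = 0"
  by (induction k arbitrary: j) auto

lemma esym_generating_poly: "(\<Sum>j\<le>k. esym q k j * y ^ j) = (\<Prod>t<k. 1 + y * q ^ t)"
proof (induction k)
  case (Suc k)
  have "(\<Sum>j\<le>Suc k. esym q (Suc k) j * y ^ j) = 1 + (\<Sum>j\<le>k. esym q (Suc k) (Suc j) * y ^ Suc j)"
    by (subst sum.atMost_Suc_shift) simp
  also have "\<dots> = 1 + (\<Sum>j\<le>k. esym q k (Suc j) * y ^ Suc j) + y * q ^ k * (\<Sum>j\<le>k. esym q k j * y ^ j)"
    by (simp add: algebra_simps sum.distrib sum_distrib_left)
  also have "1 + (\<Sum>j\<le>k. esym q k (Suc j) * y ^ Suc j) = (\<Sum>j\<le>Suc k. esym q k j * y ^ j)"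
    by (subst sum.atMost_Suc_shift) simp
  also have "\<dots> = (\<Sum>j\<le>k. esym q k j * y ^ j)"
    by (simp add: esym_eq_0_if_less)
  finally show ?case using Suc.IH by (simp add: algebra_simps)
qed simp

lemma esym_Suc_mult: "esym q k (Suc j) * (q ^ Suc j - 1) = esym q k j * (q ^ k - q ^ j)"
proof (induction k arbitrary: j)
  case (Suc k)
  show ?case
  proof (cases j)
    case 0
    then show ?thesis using Suc.IH[of 0] by (simp add: algebra_simps)
  next
    case (Suc i)
    have "esym q (Suc k) (Suc j) * (q ^ Suc j - 1)
        = esym q k (Suc (Suc i)) * (q ^ Suc (Suc i) - 1)
          + q ^ k * esym q k (Suc i) * (q ^ Suc (Suc i) - 1)"
      using Suc by (simp add: algebra_simps)
    also have "\<dots> = esym q k (Suc i) * (q ^ Suc k - q ^ Suc i) + q * (q ^ k * (esym q k (Suc i) * (q ^ Suc i - 1)))"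
      using "Suc.IH"[of "Suc i"] by (simp add: algebra_simps)
    also have "\<dots> = esym q k (Suc i) * (q ^ Suc k - q ^ Suc i) + q * (q ^ k * (esym q k i * (q ^ k - q ^ i)))"
      using "Suc.IH"[of i] by simp
    also have "\<dots> = esym q (Suc k) j * (q ^ Suc k - q ^ j)"
      using Suc by (simp add: algebra_simps)
    finally show ?thesis .
  qed
qed simp

lemma esym_root_of_unity_eq_0:
  assumes q: "primitive_root_of_unity m q" and "0 < j" "j < m"
  shows "esym q m j = 0"
  using assms(2,3)
proof (induction j)
  case (Suc i)
  have "esym q m (Suc i) * (q ^ Suc i - 1) = esym q m i * (1 - q ^ i)"
    using esym_Suc_mult[of q m i] q by (simp add: primitive_root_of_unity_def)
  also have "\<dots> = 0" using Suc by (cases i) simp_all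
  finally show ?case using q Suc.prems by (auto simp: primitive_root_of_unity_def)
qed simp

lemma esym_root_of_unity_top:
  assumes q: "primitive_root_of_unity m q" and "0 < m"
  shows "(-1) ^ m * esym q m m = -1"
proof -
  have "(\<Sum>j\<le>m. esym q m j * (-1) ^ j) = (\<Prod>t<m. 1 + (-1) * q ^ t)" by (rule esym_generating_poly)
  also have "\<dots> = 0" using \<open>0 < m\<close> by (intro prod_zero) (auto intro!: bexI[of _ 0])
  finally have s: "(\<Sum>j\<le>m. esym q m j * (-1) ^ j) = 0" .
  have "(\<Sum>j\<le>m. esym q m j * (-1) ^ j) = (\<Sum>j\<in>{0, m}. esym q m j * (-1) ^ j)"
    by (rule sum.mono_neutral_right) (auto simp: esym_root_of_unity_eq_0[OF q])
  also have "\<dots> = 1 + esym q m m * (-1) ^ m" using \<open>0 < m\<close> by simp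
  finally show ?thesis using s by (simp add: algebra_simps eq_neg_iff_add_eq_0)
qed

section \<open>Module algebras over generalized Taft algebras\<close>

lemma funpow_periodic_inverse:
  assumes "0 < n" and "\<And>a. (G ^^ n) a = a"
  shows "G ((G ^^ (n - 1)) b) = b"
  using assms(2)[of b] funpow_Suc_right[of "n - 1" G] \<open>0 < n\<close>
  by (metis Suc_diff_1 comp_apply funpow.simps(2))

lemma funpow_additive:
  fixes F :: "'a::plus \<Rightarrow> 'a"
  assumes "\<And>a b. F (a + b) = F a + F b"
  shows "(F ^^ k) (a + b) = (F ^^ k) a + (F ^^ k) b"
  using assms by (induction k) simp_all

lemma surj_mult_hom_centre:
  fixes G :: "'a::ring_1 \<Rightarrow> 'a"
  assumes mult: "\<And>a b. G (a * b) = G a * G b" and surj: "\<And>b. \<exists>a. b = G a" and "z \<in> centre"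
  shows "G z \<in> centre"
proof -
  have "G z * b = b * G z" for b
  proof -
    obtain a where b: "b = G a" using surj by blast
    show ?thesis by (simp add: b mult[symmetric] centre_commute[OF \<open>z \<in> centre\<close>])
  qed
  then show ?thesis by (simp add: centre_def)
qed

lemma twisted_derivation_inner_of_moved_centre:
  fixes \<sigma> X :: "'a::ring_1 \<Rightarrow> 'a"
  assumes simple: "simple_ring TYPE('a)"
    and X_twisted: "\<And>a b. X (a * b) = X a * b + \<sigma> a * X b"
    and z: "z \<in> centre" "\<sigma> z \<in> centre" "\<sigma> z \<noteq> z"
  shows "\<exists>c. \<forall>a. X a = c * a - \<sigma> a * c"
proof -
  have "\<sigma> z - z \<in> centre" "\<sigma> z - z \<noteq> 0" using z by (simp_all add: centre_diff)
  then obtain u where u: "u \<in> centre" "(\<sigma> z - z) * u = 1"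
    using central_unit[OF simple] by blast
  have "X a = (- (u * X z)) * a - \<sigma> a * (- (u * X z))" for a
  proof -
    have "X z * a + \<sigma> z * X a = X a * z + \<sigma> a * X z"
      using X_twisted[of z a] X_twisted[of a z] centre_commute[OF z(1), of a] by simp
    then have "(\<sigma> z - z) * X a = \<sigma> a * X z - X z * a"
      using centre_commute[OF z(1), of "X a"] by (simp add: algebra_simps)
    then have "u * ((\<sigma> z - z) * X a) = u * (\<sigma> a * X z) - u * X z * a"
      by (simp add: right_diff_distrib mult.assoc)
    moreover have "u * ((\<sigma> z - z) * X a) = X a"
      using u centre_commute[OF u(1), of "\<sigma> z - z"] by (simp add: mult.assoc[symmetric])
    ultimately show ?thesis by (simp add: centre_left_commute[OF u(1)])
  qed
  then show ?thesis by blast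
qed

lemma power_mod_period:
  fixes z :: "'a::monoid_mult"
  assumes "z ^ n = 1"
  shows "z ^ (k mod n) = z ^ k"
proof -
  have "z ^ k = (z ^ n) ^ (k div n) * z ^ (k mod n)"
    by (simp add: power_mult[symmetric] power_add[symmetric])
  then show ?thesis using assms by simp
qed

definition homogeneous_component :: "nat \<Rightarrow> (nat \<Rightarrow> 'a::ring_1 set) \<Rightarrow> 'a \<Rightarrow> nat \<Rightarrow> 'a" where
  "homogeneous_component n Agr a =
     (THE f. (\<forall>i. (i < n \<longrightarrow> f i \<in> Agr i) \<and> (n \<le> i \<longrightarrow> f i = 0)) \<and> a = (\<Sum>i<n. f i))"

locale complex_alg =
  fixes \<iota> :: "complex \<Rightarrow> 'a::ring_1"
  assumes complex_algebra: "complex_algebra \<iota>"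
begin

lemma iota_one [simp]: "\<iota> 1 = 1"
  and iota_add: "\<iota> (z + w) = \<iota> z + \<iota> w"
  and iota_mult: "\<iota> (z * w) = \<iota> z * \<iota> w"
  and iota_commute: "\<iota> z * a = a * \<iota> z"
  using complex_algebra unfolding complex_algebra_def by blast+

lemma iota_in_centre: "\<iota> z \<in> centre"
  by (simp add: centre_def iota_commute)

lemma iota_zero [simp]: "\<iota> 0 = 0"
  using iota_add[of 0 0] by simp

lemma iota_minus: "\<iota> (- z) = - \<iota> z"
  using iota_add[of z "- z"] by (simp add: eq_neg_iff_add_eq_0 add.commute)

lemma iota_diff: "\<iota> (z - w) = \<iota> z - \<iota> w"
  using iota_add[of z "- w"] by (simp add: iota_minus)

lemma iota_left_commute: "x * (\<iota> z * y) = \<iota> z * (x * y)"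
  by (rule centre_left_commute[OF iota_in_centre])

lemma iota_mult_left: "\<iota> z * (\<iota> w * y) = \<iota> (z * w) * y"
  by (simp add: iota_mult mult.assoc)

lemma iota_mult_mult: "\<iota> z * x * (\<iota> w * y) = \<iota> (z * w) * (x * y)"
proof -
  have "\<iota> z * x * (\<iota> w * y) = \<iota> z * (x * (\<iota> w * y))" by (simp add: mult.assoc)
  also have "\<dots> = \<iota> z * (\<iota> w * (x * y))" by (simp only: iota_left_commute[of x w y])
  finally show ?thesis by (simp add: iota_mult mult.assoc)
qed

lemma iota_of_nat: "\<iota> (of_nat k) = of_nat k"
  by (induction k) (simp_all add: iota_add)

lemma c_linear_inner:
  assumes "c_linear \<iota> G"
  shows "c_linear \<iota> (\<lambda>b. c * b - G b * c)"
  unfolding c_linear_def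
proof (intro conjI allI)
  fix a b
  show "c * (a + b) - G (a + b) * c = (c * a - G a * c) + (c * b - G b * c)"
    using assms by (simp add: c_linear_def distrib_left distrib_right)
next
  fix z a
  show "c * (\<iota> z * a) - G (\<iota> z * a) * c = \<iota> z * (c * a - G a * c)"
    using assms by (simp add: c_linear_def right_diff_distrib iota_left_commute mult.assoc)
qed

lemma inner_twisted_derivation_power:
  assumes G: "c_linear \<iota> G" and G_mult: "\<And>a b. G (a * b) = G a * G b" and G_one: "G 1 = 1"
    and Gc: "G c = \<iota> q * c" and Ga: "G a = \<iota> \<mu> * a"
    and X: "\<And>b. X b = c * b - G b * c"
  shows "(X ^^ k) a = (\<Sum>j\<le>k. \<iota> ((- \<mu>) ^ j * esym q k j) * (c ^ (k - j) * a * c ^ j))"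
proof -
  have "X = (\<lambda>b. c * b - G b * c)" using X by (simp add: fun_eq_iff)
  then have "c_linear \<iota> X" using c_linear_inner[OF G] by simp
  then have X_add: "\<And>a b. X (a + b) = X a + X b" and X_scale: "\<And>z a. X (\<iota> z * a) = \<iota> z * X a"
    by (simp_all add: c_linear_def)
  have G_pow: "G (c ^ p) = \<iota> (q ^ p) * c ^ p" for p
    by (induction p) (simp_all add: G_one G_mult Gc iota_mult_mult)
  define T where "T k j = c ^ (k - j) * a * c ^ j" for k j
  have X_T: "X (T k j) = T (Suc k) j - \<iota> (\<mu> * q ^ k) * T (Suc k) (Suc j)" if "j \<le> k" for k j
  proof -
    have "G (T k j) = \<iota> (q ^ (k - j) * \<mu> * q ^ j) * T k j"
      by (simp add: T_def G_mult G_pow Ga iota_mult_mult)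
    also have "q ^ (k - j) * \<mu> * q ^ j = \<mu> * q ^ k"
      using that by (simp add: mult_ac power_add[symmetric])
    finally have "G (T k j) = \<iota> (\<mu> * q ^ k) * T k j" .
    moreover have "c * T k j = T (Suc k) j" using that by (simp add: T_def Suc_diff_le mult.assoc)
    moreover have "T k j * c = T (Suc k) (Suc j)" by (simp add: T_def mult.assoc power_commutes)
    ultimately show ?thesis by (simp add: X mult.assoc)
  qed
  define \<gamma> where "\<gamma> k j = (- \<mu>) ^ j * esym q k j" for k j
  have "(X ^^ k) a = (\<Sum>j\<le>k. \<iota> (\<gamma> k j) * T k j)"
  proof (induction k)
    case (Suc k)
    have "(X ^^ Suc k) a = (\<Sum>j\<le>k. \<iota> (\<gamma> k j) * X (T k j))"
      using Suc by (simp add: additive_sum[where f = X, OF X_add] X_scale)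
    also have "\<dots> = (\<Sum>j\<le>k. \<iota> (\<gamma> k j) * T (Suc k) j)
        - (\<Sum>j\<le>k. \<iota> (\<mu> * q ^ k * \<gamma> k j) * T (Suc k) (Suc j))"
      by (simp add: X_T right_diff_distrib sum_subtractf iota_mult_left mult.commute)
    also have "(\<Sum>j\<le>k. \<iota> (\<gamma> k j) * T (Suc k) j) = (\<Sum>j\<le>Suc k. \<iota> (\<gamma> k j) * T (Suc k) j)"
      by (simp add: \<gamma>_def esym_eq_0_if_less)
    also have "\<dots> = T (Suc k) 0 + (\<Sum>j\<le>k. \<iota> (\<gamma> k (Suc j)) * T (Suc k) (Suc j))"
      by (subst sum.atMost_Suc_shift) (simp add: \<gamma>_def)
    finally have "(X ^^ Suc k) a = T (Suc k) 0
        + (\<Sum>j\<le>k. \<iota> (\<gamma> k (Suc j) - \<mu> * q ^ k * \<gamma> k j) * T (Suc k) (Suc j))"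
      by (simp add: iota_diff left_diff_distrib sum_subtractf)
    also have "\<dots> = T (Suc k) 0 + (\<Sum>j\<le>k. \<iota> (\<gamma> (Suc k) (Suc j)) * T (Suc k) (Suc j))"
      by (simp add: \<gamma>_def algebra_simps)
    also have "\<dots> = (\<Sum>j\<le>Suc k. \<iota> (\<gamma> (Suc k) j) * T (Suc k) j)"
      by (subst sum.atMost_Suc_shift) (simp add: \<gamma>_def)
    finally show ?case .
  qed (simp add: \<gamma>_def T_def)
  then show ?thesis by (simp add: \<gamma>_def T_def)
qed

lemma inner_twisted_derivation_power_root_of_unity:
  assumes G: "c_linear \<iota> G" and G_mult: "\<And>a b. G (a * b) = G a * G b" and G_one: "G 1 = 1"
    and Gc: "G c = \<iota> q * c" and Ga: "G a = \<iota> \<mu> * a"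
    and X: "\<And>b. X b = c * b - G b * c"
    and q: "primitive_root_of_unity m q" and "0 < m"
  shows "(X ^^ m) a = c ^ m * a - \<iota> (\<mu> ^ m) * a * c ^ m"
proof -
  have "(X ^^ m) a = (\<Sum>j\<in>{0, m}. \<iota> ((- \<mu>) ^ j * esym q m j) * (c ^ (m - j) * a * c ^ j))"
    unfolding inner_twisted_derivation_power[OF assms(1-6)]
    by (rule sum.mono_neutral_right) (auto simp: esym_root_of_unity_eq_0[OF q])
  moreover have "(- \<mu>) ^ m * esym q m m = - (\<mu> ^ m)"
    using esym_root_of_unity_top[OF q \<open>0 < m\<close>] by (simp add: power_minus[of \<mu>] mult_ac)
  ultimately show ?thesis using \<open>0 < m\<close> by (simp add: iota_minus mult.assoc)
qed

lemma funpow_eigenvector: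
  assumes "c_linear \<iota> G" and "G a = \<iota> \<mu> * a"
  shows "(G ^^ k) a = \<iota> (\<mu> ^ k) * a"
proof (induction k)
  case (Suc k)
  have "(G ^^ Suc k) a = \<iota> (\<mu> ^ k) * G a"
    using Suc assms(1) by (simp add: c_linear_def)
  also have "\<dots> = \<iota> (\<mu> ^ Suc k) * a"
    by (simp add: assms(2) iota_mult_left mult.commute)
  finally show ?case .
qed simp

lemma twisted_derivation_vanishes_on_centre:
  assumes simple: "simple_ring TYPE('a)"
    and X_twisted: "\<And>a b. X (a * b) = X a * b + G a * X b"
    and G_centre: "\<And>z. z \<in> centre \<Longrightarrow> G z = z"
    and GX: "\<And>a. G (X a) = \<iota> q * X (G a)" and "q \<noteq> 1" and z: "z \<in> centre"
  shows "X z = 0"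
proof (rule normalizing_square_zero_eq_0[OF simple])
  show norm: "X z * a = G a * X z" for a
  proof -
    have "X (z * a) = X (a * z)" by (simp add: centre_commute[OF z])
    then have "X z * a + z * X a = X a * z + G a * X z" by (simp add: X_twisted G_centre[OF z])
    then show ?thesis by (simp add: centre_commute[OF z, of "X a"])
  qed
  have "X z * X z = \<iota> q * (X z * X z)"
    using norm[of "X z"] GX[of z] G_centre[OF z] by (simp add: mult.assoc)
  then have "\<iota> (1 - q) * (X z * X z) = 0" by (simp add: iota_diff left_diff_distrib)
  then have "\<iota> (1 / (1 - q)) * (\<iota> (1 - q) * (X z * X z)) = 0" by simp
  then show "X z * X z = 0" using \<open>q \<noteq> 1\<close> by (simp add: iota_mult_left)
qed

lemma taft_module_algebra_inner:
  assumes cs: "central_simple TYPE('a)" and tma: "taft_module_algebra \<iota> n m \<alpha> q G X"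
    and "0 < n" and q: "primitive_root_of_unity m q" and "0 < m"
  shows "\<exists>c. \<forall>a. X a = c * a - G a * c"
proof -
  have simple: "simple_ring TYPE('a)" using cs by (simp add: central_simple_def)
  have X_add: "\<And>a b. X (a + b) = X a + X b"
    and Xm: "\<And>a. (X ^^ m) a = \<iota> \<alpha> * (a - (G ^^ m) a)" and Gn: "\<And>a. (G ^^ n) a = a"
    and GX: "\<And>a. G (X a) = \<iota> q * X (G a)"
    and G_add: "\<And>a b. G (a + b) = G a + G b" and G_mult: "\<And>a b. G (a * b) = G a * G b"
    and X_twisted: "\<And>a b. X (a * b) = X a * b + G a * X b"
    using tma unfolding taft_module_algebra_def taft_module_def c_linear_def by blast+
  show ?thesis
  proof (cases "\<exists>z\<in>centre. G z \<noteq> z")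
    case True
    then obtain z where "z \<in> centre" "G z \<noteq> z" by blast
    moreover have "G z \<in> centre"
      using surj_mult_hom_centre[where G = G, OF G_mult _ \<open>z \<in> centre\<close>] funpow_periodic_inverse[OF \<open>0 < n\<close> Gn]
      by metis
    ultimately show ?thesis by (intro twisted_derivation_inner_of_moved_centre[OF simple X_twisted])
  next
    case False
    then have G_centre: "\<And>z. z \<in> centre \<Longrightarrow> G z = z" by blast
    show ?thesis
    proof (cases "m = 1")
      case True
      then have "X a = \<iota> \<alpha> * a - G a * \<iota> \<alpha>" for a
        using Xm[of a] by (simp add: right_diff_distrib iota_commute[of \<alpha> "G a"])
      then show ?thesis by blast
    next
      case False
      then have "q \<noteq> 1" using q \<open>0 < m\<close> by (auto simp: primitive_root_of_unity_def)
      then have "X z = 0" if "z \<in> centre" for z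
        using that twisted_derivation_vanishes_on_centre[where X = X and G = G,
            OF simple X_twisted G_centre GX] by blast
      then have "X (z * a) = z * X a" if "z \<in> centre" for z a
        using X_twisted[of z a] G_centre[OF that] that by simp
      from twisted_derivation_inner[OF cs G_add G_mult G_centre X_add this X_twisted]
      show ?thesis .
    qed
  qed
qed

lemma inner_element_conj:
  assumes G: "c_linear \<iota> G" and G_mult: "\<And>a b. G (a * b) = G a * G b"
    and G_surj: "\<And>b. \<exists>a. b = G a" and GX: "\<And>a. G (X a) = \<iota> q * X (G a)" and "q \<noteq> 0"
    and c: "\<And>a. X a = c * a - G a * c"
  shows "X b = (\<iota> (1 / q) * G c) * b - G b * (\<iota> (1 / q) * G c)"
proof -
  obtain a where b: "b = G a" using G_surj by blast
  have G_diff: "G (u - v) = G u - G v" for u v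
    using G by (metis add_diff_cancel c_linear_def diff_add_cancel)
  have "\<iota> q * X b = G (X a)" by (simp add: b GX)
  also have "\<dots> = G c * b - G b * G c" by (simp add: c G_diff G_mult b)
  finally have "\<iota> q * X b = G c * b - G b * G c" .
  then have "\<iota> (1 / q) * (\<iota> q * X b) = \<iota> (1 / q) * (G c * b - G b * G c)" by simp
  then have "X b = \<iota> (1 / q) * (G c * b) - \<iota> (1 / q) * (G b * G c)"
    using \<open>q \<noteq> 0\<close> by (simp add: iota_mult_left right_diff_distrib)
  then show ?thesis by (simp add: iota_left_commute[of "G b" "1 / q" "G c"] mult.assoc)
qed

lemma eigen_sum_of_finite_order:
  assumes G: "c_linear \<iota> G" and "(G ^^ n) v = v" and "q ^ n = 1"
  shows "G (\<Sum>j<n. \<iota> ((1 / q) ^ j) * (G ^^ j) v) = \<iota> q * (\<Sum>j<n. \<iota> ((1 / q) ^ j) * (G ^^ j) v)"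
proof -
  have G_add: "\<And>a b. G (a + b) = G a + G b" and G_scale: "\<And>z a. G (\<iota> z * a) = \<iota> z * G a"
    using G by (simp_all add: c_linear_def)
  show ?thesis
  proof (cases "n = 0")
    case True
    then show ?thesis using G_add[of 0 0] by simp
  next
    case False
    then have "q \<noteq> 0" using \<open>q ^ n = 1\<close> by (metis power_0_left zero_neq_one)
    define f where "f j = \<iota> (q * (1 / q) ^ j) * (G ^^ j) v" for j
    have "G (\<Sum>j<n. \<iota> ((1 / q) ^ j) * (G ^^ j) v) = (\<Sum>j<n. f (Suc j))"
      using \<open>q \<noteq> 0\<close> by (simp add: additive_sum[where f = G, OF G_add] G_scale f_def)
    also have "\<dots> = (\<Sum>j<n. f j)"
    proof -
      have "f n = f 0" using assms(2,3) by (simp add: f_def power_one_over)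
      then show ?thesis
        using sum.lessThan_Suc_shift[of f n] sum.lessThan_Suc[of f n] by (simp add: add.commute)
    qed
    also have "\<dots> = \<iota> q * (\<Sum>j<n. \<iota> ((1 / q) ^ j) * (G ^^ j) v)"
      by (simp add: f_def sum_distrib_left iota_mult_left)
    finally show ?thesis .
  qed
qed

lemma iota_scale_diff: "\<iota> \<alpha> * (a - \<iota> \<mu> * a) = \<iota> (\<alpha> * (1 - \<mu>)) * a"
  by (simp add: iota_mult iota_diff right_diff_distrib left_diff_distrib mult.assoc)

lemma taft_module_algebra_eigen_inner:
  assumes cs: "central_simple TYPE('a)" and tma: "taft_module_algebra \<iota> n m \<alpha> q G X"
    and "0 < n" "0 < m" "m dvd n" and q: "primitive_root_of_unity m q"
  shows "\<exists>c. G c = \<iota> q * c \<and> (\<forall>a. X a = c * a - G a * c)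
           \<and> (\<forall>\<mu> a. G a = \<iota> \<mu> * a \<longrightarrow> c ^ m * a - \<iota> (\<mu> ^ m) * a * c ^ m = \<iota> (\<alpha> * (1 - \<mu> ^ m)) * a)"
proof -
  have G: "c_linear \<iota> G" and Xm: "\<And>a. (X ^^ m) a = \<iota> \<alpha> * (a - (G ^^ m) a)"
    and Gn: "\<And>a. (G ^^ n) a = a" and GX: "\<And>a. G (X a) = \<iota> q * X (G a)"
    and G_mult: "\<And>a b. G (a * b) = G a * G b" and G_one: "G 1 = 1"
    using tma unfolding taft_module_algebra_def taft_module_def by blast+
  have G_scale: "\<And>z a. G (\<iota> z * a) = \<iota> z * G a" using G by (simp add: c_linear_def)
  have G_surj: "\<exists>a. b = G a" for b using funpow_periodic_inverse[OF \<open>0 < n\<close> Gn] by metis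
  obtain k where "n = m * k" using \<open>m dvd n\<close> by blast
  then have "q ^ n = 1" using q by (simp add: primitive_root_of_unity_def power_mult)
  then have "q \<noteq> 0" using \<open>0 < n\<close> by (metis power_0_left zero_neq_one not_gr0)
  obtain c0 where c0: "\<And>a. X a = c0 * a - G a * c0"
    using taft_module_algebra_inner[OF cs tma \<open>0 < n\<close> q \<open>0 < m\<close>] by blast
  \<comment> \<open>every \<open>c' j\<close> implements \<open>X\<close> as well, and their average is a \<open>q\<close>-eigenvector\<close>
  define c' where "c' j = \<iota> ((1 / q) ^ j) * (G ^^ j) c0" for j
  have c': "X a = c' j * a - G a * c' j" for j a
  proof (induction j arbitrary: a)
    case (Suc j)
    have "c' (Suc j) = \<iota> (1 / q) * G (c' j)" by (simp add: c'_def G_scale iota_mult_left)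
    then show ?case using inner_element_conj[OF G G_mult G_surj GX \<open>q \<noteq> 0\<close> Suc.IH] by simp
  qed (simp add: c'_def c0)
  define c where "c = \<iota> (1 / of_nat n) * (\<Sum>j<n. c' j)"
  have "X a = c * a - G a * c" for a
  proof -
    have "c * a - G a * c = \<iota> (1 / of_nat n) * (\<Sum>j<n. c' j * a - G a * c' j)"
      by (simp add: c_def sum_distrib_left sum_distrib_right sum_subtractf right_diff_distrib
          mult.assoc iota_left_commute[of "G a"])
    also have "\<dots> = \<iota> (1 / of_nat n) * (\<iota> (of_nat n) * X a)"
      by (simp add: c'[symmetric] iota_of_nat)
    finally show ?thesis using \<open>0 < n\<close> by (simp add: iota_mult_left)
  qed
  moreover have "G c = \<iota> q * c"
    using eigen_sum_of_finite_order[OF G Gn \<open>q ^ n = 1\<close>]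
    by (simp add: c_def c'_def G_scale iota_mult_left mult.commute)
  moreover have "c ^ m * a - \<iota> (\<mu> ^ m) * a * c ^ m = \<iota> (\<alpha> * (1 - \<mu> ^ m)) * a"
    if "G a = \<iota> \<mu> * a" for \<mu> a
  proof -
    have "c ^ m * a - \<iota> (\<mu> ^ m) * a * c ^ m = (X ^^ m) a"
      by (rule inner_twisted_derivation_power_root_of_unity[OF G G_mult G_one \<open>G c = \<iota> q * c\<close>
            that \<open>\<And>a. X a = c * a - G a * c\<close> q \<open>0 < m\<close>, symmetric])
    also have "\<dots> = \<iota> (\<alpha> * (1 - \<mu> ^ m)) * a"
      using Xm[of a] funpow_eigenvector[OF G that] by (simp add: iota_scale_diff)
    finally show ?thesis .
  qed
  ultimately show ?thesis by blast
qed

subsection \<open>Gradings by \<open>\<int>/n\<int>\<close>\<close>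

context
  fixes n :: nat and Agr :: "nat \<Rightarrow> 'a set"
  assumes graded: "zn_graded \<iota> n Agr"
begin

lemma graded_closed:
  shows graded_zero: "i < n \<Longrightarrow> 0 \<in> Agr i"
    and graded_add: "i < n \<Longrightarrow> a \<in> Agr i \<Longrightarrow> b \<in> Agr i \<Longrightarrow> a + b \<in> Agr i"
    and graded_scale: "i < n \<Longrightarrow> a \<in> Agr i \<Longrightarrow> \<iota> z * a \<in> Agr i"
    and graded_mult: "i < n \<Longrightarrow> j < n \<Longrightarrow> a \<in> Agr i \<Longrightarrow> b \<in> Agr j \<Longrightarrow> a * b \<in> Agr ((i + j) mod n)"
  using graded unfolding zn_graded_def by blast+

abbreviation is_decomposition :: "'a \<Rightarrow> (nat \<Rightarrow> 'a) \<Rightarrow> bool" where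
  "is_decomposition a f \<equiv> (\<forall>i. (i < n \<longrightarrow> f i \<in> Agr i) \<and> (n \<le> i \<longrightarrow> f i = 0)) \<and> a = (\<Sum>i<n. f i)"

lemma ex1_decomposition: "\<exists>!f. is_decomposition a f"
  using graded unfolding zn_graded_def by (elim conjE) (rule spec)

lemma homogeneous_component: "is_decomposition a (homogeneous_component n Agr a)"
  unfolding homogeneous_component_def by (rule theI'[OF ex1_decomposition])

lemma homogeneous_component_unique: "is_decomposition a f \<Longrightarrow> homogeneous_component n Agr a = f"
  unfolding homogeneous_component_def by (rule the1_equality[OF ex1_decomposition])

lemma homogeneous_component_in: "i < n \<Longrightarrow> homogeneous_component n Agr a i \<in> Agr i"
  and homogeneous_component_beyond: "n \<le> i \<Longrightarrow> homogeneous_component n Agr a i = 0"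
  and sum_homogeneous_component: "(\<Sum>i<n. homogeneous_component n Agr a i) = a"
  using homogeneous_component[of a] by simp_all

lemma homogeneous_component_of_homogeneous:
  assumes "j < n" "a \<in> Agr j"
  shows "homogeneous_component n Agr a = (\<lambda>i. if i = j then a else 0)"
  by (rule homogeneous_component_unique) (use assms in \<open>auto simp: graded_zero\<close>)

lemma additive_eq_on_homogeneous:
  fixes F F' :: "'a \<Rightarrow> 'b::ab_group_add"
  assumes "\<And>a b. F (a + b) = F a + F b" "\<And>a b. F' (a + b) = F' a + F' b"
    and "\<And>i a. i < n \<Longrightarrow> a \<in> Agr i \<Longrightarrow> F a = F' a"
  shows "F = F'"
proof
  fix a
  have "F a = (\<Sum>i<n. F (homogeneous_component n Agr a i))"
    using additive_sum[where f = F, OF assms(1)] by (metis sum_homogeneous_component)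
  also have "\<dots> = (\<Sum>i<n. F' (homogeneous_component n Agr a i))"
    using assms(3) homogeneous_component_in by simp
  also have "\<dots> = F' a"
    using additive_sum[where f = F', OF assms(2)] by (metis sum_homogeneous_component)
  finally show "F a = F' a" .
qed

definition grading_action :: "complex \<Rightarrow> 'a \<Rightarrow> 'a" where
  "grading_action \<zeta> a = (\<Sum>i<n. \<iota> (\<zeta> ^ i) * homogeneous_component n Agr a i)"

lemma grading_action_homogeneous:
  "i < n \<Longrightarrow> a \<in> Agr i \<Longrightarrow> grading_action \<zeta> a = \<iota> (\<zeta> ^ i) * a"
  by (simp add: grading_action_def homogeneous_component_of_homogeneous if_distrib cong: if_cong)

lemma c_linear_grading_action: "c_linear \<iota> (grading_action \<zeta>)"
proof -
  let ?h = "homogeneous_component n Agr"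
  have "?h (a + b) = (\<lambda>i. ?h a i + ?h b i)" for a b
    by (intro homogeneous_component_unique)
      (simp add: sum.distrib sum_homogeneous_component graded_add homogeneous_component_in
        homogeneous_component_beyond)
  moreover have "?h (\<iota> z * a) = (\<lambda>i. \<iota> z * ?h a i)" for z a
    by (intro homogeneous_component_unique)
      (simp add: sum_distrib_left[symmetric] sum_homogeneous_component graded_scale
        homogeneous_component_in homogeneous_component_beyond)
  ultimately show ?thesis
    by (simp add: c_linear_def grading_action_def distrib_left sum.distrib sum_distrib_left
        iota_mult_left mult.commute)
qed

lemma grading_action_compose: "grading_action \<zeta> (grading_action \<xi> a) = grading_action (\<zeta> * \<xi>) a"
proof -
  have "homogeneous_component n Agr (grading_action \<xi> a)
      = (\<lambda>i. \<iota> (\<xi> ^ i) * homogeneous_component n Agr a i)"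
    by (intro homogeneous_component_unique)
      (simp add: grading_action_def graded_scale homogeneous_component_in homogeneous_component_beyond)
  then show ?thesis
    by (simp add: grading_action_def iota_mult_left power_mult_distrib)
qed

lemma grading_action_one: "grading_action 1 a = a"
  by (simp add: grading_action_def sum_homogeneous_component)

lemma funpow_grading_action: "(grading_action \<zeta> ^^ k) a = grading_action (\<zeta> ^ k) a"
  by (induction k) (simp_all add: grading_action_one grading_action_compose)

lemma grading_action_mult:
  assumes "\<zeta> ^ n = 1"
  shows "grading_action \<zeta> (a * b) = grading_action \<zeta> a * grading_action \<zeta> b"
proof -
  let ?h = "homogeneous_component n Agr"
  have add: "grading_action \<zeta> (u + v) = grading_action \<zeta> u + grading_action \<zeta> v" for u v
    using c_linear_grading_action by (simp add: c_linear_def)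
  have "grading_action \<zeta> (a * b) = grading_action \<zeta> (\<Sum>i<n. \<Sum>j<n. ?h a i * ?h b j)"
    by (simp add: sum_homogeneous_component sum_product[symmetric])
  also have "\<dots> = (\<Sum>i<n. \<Sum>j<n. grading_action \<zeta> (?h a i * ?h b j))"
    by (simp add: additive_sum[where f = "grading_action \<zeta>", OF add])
  also have "\<dots> = (\<Sum>i<n. \<Sum>j<n. \<iota> (\<zeta> ^ i) * ?h a i * (\<iota> (\<zeta> ^ j) * ?h b j))"
  proof (intro sum.cong refl)
    fix i j assume "i \<in> {..<n}" "j \<in> {..<n}"
    then have "(i + j) mod n < n" "?h a i * ?h b j \<in> Agr ((i + j) mod n)"
      by (simp_all add: graded_mult homogeneous_component_in)
    then have "grading_action \<zeta> (?h a i * ?h b j) = \<iota> (\<zeta> ^ i * \<zeta> ^ j) * (?h a i * ?h b j)"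
      by (simp add: grading_action_homogeneous power_mod_period[OF assms] power_add)
    then show "grading_action \<zeta> (?h a i * ?h b j) = \<iota> (\<zeta> ^ i) * ?h a i * (\<iota> (\<zeta> ^ j) * ?h b j)"
      by (simp add: iota_mult_mult)
  qed
  also have "\<dots> = grading_action \<zeta> a * grading_action \<zeta> b"
    by (simp add: grading_action_def sum_product)
  finally show ?thesis .
qed

lemma taft_module_algebra_of_grading:
  assumes "0 < n" "0 < m" and q: "primitive_root_of_unity m q"
    and \<zeta>: "\<zeta> ^ n = 1" "\<zeta> ^ (n div m) = q" and c: "c \<in> Agr ((n div m) mod n)"
    and rel: "\<forall>i<n. \<forall>a\<in>Agr i.
      c ^ m * a - \<iota> (\<zeta> ^ (m * i)) * a * c ^ m = \<iota> (\<alpha> * (1 - \<zeta> ^ (m * i))) * a"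
  defines "G \<equiv> grading_action \<zeta>" and "X \<equiv> \<lambda>b. c * b - grading_action \<zeta> b * c"
  shows "taft_module_algebra \<iota> n m \<alpha> q G X"
proof -
  have G: "c_linear \<iota> G" unfolding G_def by (rule c_linear_grading_action)
  then have X: "c_linear \<iota> X" unfolding X_def G_def by (rule c_linear_inner)
  have G_mult: "G (a * b) = G a * G b" for a b
    unfolding G_def by (rule grading_action_mult[OF \<zeta>(1)])
  have Gn: "(G ^^ n) a = a" for a by (simp add: G_def funpow_grading_action \<zeta>(1) grading_action_one)
  have G_one: "G 1 = 1"
  proof -
    obtain b where "G b = 1" using funpow_periodic_inverse[OF \<open>0 < n\<close> Gn] by metis
    then show ?thesis using G_mult[of 1 b] by simp
  qed
  have Gc: "G c = \<iota> q * c"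
    using grading_action_homogeneous[OF _ c] \<open>0 < n\<close> \<zeta>
    by (simp add: G_def power_mod_period)
  have "(X ^^ m) = (\<lambda>a. \<iota> \<alpha> * (a - (G ^^ m) a))"
  proof (rule additive_eq_on_homogeneous)
    show "(X ^^ m) (a + b) = (X ^^ m) a + (X ^^ m) b" for a b
      using X by (intro funpow_additive) (simp add: c_linear_def)
    show "\<iota> \<alpha> * (a + b - (G ^^ m) (a + b))
        = \<iota> \<alpha> * (a - (G ^^ m) a) + \<iota> \<alpha> * (b - (G ^^ m) b)" for a b
      using G funpow_additive[of G] by (simp add: c_linear_def algebra_simps)
    fix i a assume "i < n" "a \<in> Agr i"
    then have Ga: "G a = \<iota> (\<zeta> ^ i) * a" by (simp add: G_def grading_action_homogeneous)
    have "(X ^^ m) a = c ^ m * a - \<iota> ((\<zeta> ^ i) ^ m) * a * c ^ m"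
      using inner_twisted_derivation_power_root_of_unity[OF G G_mult G_one Gc Ga _ q \<open>0 < m\<close>]
      by (simp add: X_def G_def)
    also have "\<dots> = \<iota> \<alpha> * (a - (G ^^ m) a)"
      using rel \<open>i < n\<close> \<open>a \<in> Agr i\<close> funpow_eigenvector[OF G Ga]
      by (simp add: iota_scale_diff power_mult[symmetric] mult.commute)
    finally show "(X ^^ m) a = \<iota> \<alpha> * (a - (G ^^ m) a)" .
  qed
  moreover have "G (X a) = \<iota> q * X (G a)" for a
  proof -
    have G_diff: "G (u - v) = G u - G v" for u v
      using G by (metis add_diff_cancel c_linear_def diff_add_cancel)
    have "G (X a) = \<iota> q * c * G a - G (G a) * (\<iota> q * c)"
      by (simp add: X_def G_def[symmetric] G_diff G_mult Gc)
    also have "\<dots> = \<iota> q * X (G a)"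
      by (simp add: X_def G_def[symmetric] right_diff_distrib iota_left_commute[of "G (G a)" q c]
          mult.assoc)
    finally show ?thesis .
  qed
  moreover have "X (a * b) = X a * b + G a * X b" for a b
    by (simp add: X_def G_def[symmetric] G_mult algebra_simps)
  ultimately show ?thesis
    using G X Gn G_mult G_one by (simp add: taft_module_algebra_def taft_module_def X_def G_def)
qed

lemma taft_module_unique_on_grading:
  assumes tm: "taft_module \<iota> n m \<alpha> q G X"
    and hom: "\<forall>i<n. \<forall>a\<in>Agr i. G a = \<iota> (\<zeta> ^ i) * a \<and> X a = c * a - \<iota> (\<zeta> ^ i) * a * c"
  shows "G = grading_action \<zeta> \<and> X = (\<lambda>b. c * b - grading_action \<zeta> b * c)"
proof
  have "c_linear \<iota> G" "c_linear \<iota> X" using tm by (simp_all add: taft_module_def)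
  moreover have "c_linear \<iota> (\<lambda>b. c * b - grading_action \<zeta> b * c)"
    by (rule c_linear_inner[OF c_linear_grading_action])
  ultimately show "G = grading_action \<zeta>" "X = (\<lambda>b. c * b - grading_action \<zeta> b * c)"
    using hom c_linear_grading_action
    by (auto intro!: additive_eq_on_homogeneous simp: c_linear_def grading_action_homogeneous)
qed


lemma taft_module_algebra_of_grading_exists_unique:
  assumes "0 < n" "0 < m" and q: "primitive_root_of_unity m q"
    and \<zeta>: "\<zeta> ^ n = 1" "\<zeta> ^ (n div m) = q" and c: "c \<in> Agr ((n div m) mod n)"
    and rel: "\<forall>i<n. \<forall>a\<in>Agr i.
      c ^ m * a - \<iota> (\<zeta> ^ (m * i)) * a * c ^ m = \<iota> (\<alpha> * (1 - \<zeta> ^ (m * i))) * a"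
  shows "\<exists>G X. taft_module \<iota> n m \<alpha> q G X
           \<and> (\<forall>i<n. \<forall>a\<in>Agr i. G a = \<iota> (\<zeta> ^ i) * a \<and> X a = c * a - \<iota> (\<zeta> ^ i) * a * c)
           \<and> (\<forall>G' X'. taft_module \<iota> n m \<alpha> q G' X'
                \<and> (\<forall>i<n. \<forall>a\<in>Agr i. G' a = \<iota> (\<zeta> ^ i) * a \<and> X' a = c * a - \<iota> (\<zeta> ^ i) * a * c)
                \<longrightarrow> G' = G \<and> X' = X)
           \<and> taft_module_algebra \<iota> n m \<alpha> q G X"
proof (rule exI[of _ "grading_action \<zeta>"], rule exI[of _ "\<lambda>b. c * b - grading_action \<zeta> b * c"],
    intro conjI)
  show tma: "taft_module_algebra \<iota> n m \<alpha> q (grading_action \<zeta>) (\<lambda>b. c * b - grading_action \<zeta> b * c)"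
    by (rule taft_module_algebra_of_grading[OF assms])
  then show "taft_module \<iota> n m \<alpha> q (grading_action \<zeta>) (\<lambda>b. c * b - grading_action \<zeta> b * c)"
    by (simp add: taft_module_algebra_def)
  show "\<forall>i<n. \<forall>a\<in>Agr i. grading_action \<zeta> a = \<iota> (\<zeta> ^ i) * a
      \<and> c * a - grading_action \<zeta> a * c = c * a - \<iota> (\<zeta> ^ i) * a * c"
    by (simp add: grading_action_homogeneous)
qed (use taft_module_unique_on_grading in blast)
end

end

theorem theorem3p1:
  fixes \<iota> :: "complex \<Rightarrow> 'a::ring_1"
    and n m :: nat and q \<zeta> \<alpha> :: complex
  assumes alg: "complex_algebra \<iota>"
    and mpos: "0 < m" and npos: "0 < n" and mdvd: "m dvd n"
    and q: "primitive_root_of_unity m q"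
    and zeta: "primitive_root_of_unity n \<zeta>" and zq: "\<zeta> ^ (n div m) = q"
  shows
   "(central_simple TYPE('a) \<longrightarrow>
      (\<forall>G X. taft_module_algebra \<iota> n m \<alpha> q G X \<longrightarrow>
        (\<exists>c. G c = \<iota> (\<zeta> ^ (n div m)) * c
           \<and> (\<forall>i<n. \<forall>a. G a = \<iota> (\<zeta> ^ i) * a \<longrightarrow> X a = c * a - \<iota> (\<zeta> ^ i) * a * c)
           \<and> (\<forall>i<n. \<forall>a. G a = \<iota> (\<zeta> ^ i) * a \<longrightarrow>
                c ^ m * a - \<iota> (\<zeta> ^ (m * i)) * a * c ^ m = \<iota> (\<alpha> * (1 - \<zeta> ^ (m * i))) * a))))
    \<and>
    (\<forall>Agr c. zn_graded \<iota> n Agr \<and> central_simple TYPE('a) \<and> division_ring_pred TYPE('a)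
        \<and> c \<in> Agr ((n div m) mod n)
        \<and> (\<forall>i<n. \<forall>a\<in>Agr i.
              c ^ m * a - \<iota> (\<zeta> ^ (m * i)) * a * c ^ m = \<iota> (\<alpha> * (1 - \<zeta> ^ (m * i))) * a)
      \<longrightarrow> (\<exists>G X. taft_module \<iota> n m \<alpha> q G X
             \<and> (\<forall>i<n. \<forall>a\<in>Agr i. G a = \<iota> (\<zeta> ^ i) * a \<and> X a = c * a - \<iota> (\<zeta> ^ i) * a * c)
             \<and> (\<forall>G' X'. taft_module \<iota> n m \<alpha> q G' X'
                  \<and> (\<forall>i<n. \<forall>a\<in>Agr i. G' a = \<iota> (\<zeta> ^ i) * a \<and> X' a = c * a - \<iota> (\<zeta> ^ i) * a * c)
                  \<longrightarrow> G' = G \<and> X' = X)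
             \<and> taft_module_algebra \<iota> n m \<alpha> q G X))"
proof -
  interpret complex_alg \<iota> by (rule complex_alg.intro[OF alg])
  have "\<zeta> ^ n = 1" using zeta by (simp add: primitive_root_of_unity_def)
  show ?thesis
  proof (intro conjI allI impI)
    fix G X assume "central_simple TYPE('a)" "taft_module_algebra \<iota> n m \<alpha> q G X"
    then obtain c where Gc: "G c = \<iota> q * c" and X: "\<forall>a. X a = c * a - G a * c"
      and rel: "\<forall>\<mu> a. G a = \<iota> \<mu> * a \<longrightarrow> c ^ m * a - \<iota> (\<mu> ^ m) * a * c ^ m = \<iota> (\<alpha> * (1 - \<mu> ^ m)) * a"
      using taft_module_algebra_eigen_inner npos mpos mdvd q by blast
    show "\<exists>c. G c = \<iota> (\<zeta> ^ (n div m)) * c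
             \<and> (\<forall>i<n. \<forall>a. G a = \<iota> (\<zeta> ^ i) * a \<longrightarrow> X a = c * a - \<iota> (\<zeta> ^ i) * a * c)
             \<and> (\<forall>i<n. \<forall>a. G a = \<iota> (\<zeta> ^ i) * a \<longrightarrow>
                  c ^ m * a - \<iota> (\<zeta> ^ (m * i)) * a * c ^ m = \<iota> (\<alpha> * (1 - \<zeta> ^ (m * i))) * a)"
    proof (intro exI[of _ c] conjI allI impI)
      show "G c = \<iota> (\<zeta> ^ (n div m)) * c" using Gc zq by simp
      fix i a assume "G a = \<iota> (\<zeta> ^ i) * a"
      then show "X a = c * a - \<iota> (\<zeta> ^ i) * a * c" using X by simp
      show "c ^ m * a - \<iota> (\<zeta> ^ (m * i)) * a * c ^ m = \<iota> (\<alpha> * (1 - \<zeta> ^ (m * i))) * a"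
        using rel[rule_format, OF \<open>G a = \<iota> (\<zeta> ^ i) * a\<close>]
        by (simp only: power_mult[symmetric] mult.commute[of i m])
    qed
  qed (use taft_module_algebra_of_grading_exists_unique[OF _ npos mpos q \<open>\<zeta> ^ n = 1\<close> zq] in blast)
qed

end
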